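(* Fix $T>0$ and $\rho\in[0,T)$. Let $\xi\in C([\rho,T];PC^{(2),1}[0,1])$ satisfy $\alpha_0\xi_x(0,t)+\beta_0\xi(0,t)=0$ for all $t\in[\rho,T]$, and set $f_\xi(t)=\alpha_1\xi_x(1,t)+\beta_1\xi(1,t)$. Assume that for every $t\in[\rho,T]$ the set of points at which $\xi_{xx}(\cdot,t)$ is not differentiable is a subset of $\mathcal I$. Then there exists $C>0$ independent of $\xi$ and $n$ such that for all sufficiently large $n$, $$\sup_{t\in[\rho,T]}\big\|R_n\mathscr P\xi(\cdot,t)-P_nR_n\xi(\cdot,t)-B_nf_\xi(t)\big\|_{2d}\le C\sqrt h\sup_{t\in[\rho,T]}\|\xi(\cdot,t)\|_{PC^{(2),1}[0,1]},$$ where $h=1/(n+1)$.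
   Context: A function $\psi:[0,1]\to\mathbb R$ belongs to $PC^k[0,1]$ if there is a finite partition of $[0,1]$ into disjoint intervals such that on each of them $\psi$ is the restriction of some $C^k[0,1]$ function; $\|\psi\|_{PC^k[0,1]}$ is the supremum of $\|\psi\|_{C^k[a,b]}$ over all intervals $[a,b]\subset[0,1]$ on which $\psi$ is $k$ times continuously differentiable; $PC[0,1]=PC^0[0,1]$. $PC^{(2),1}[0,1]$ is the set of $\psi\in C^1[0,1]\cap H^2(0,1)$ with $\psi_{xx}\in PC^1[0,1]$, with norm $\|\psi\|_{PC^{(2),1}[0,1]}=\|\psi\|_{C^1[0,1]}+\|\psi_{xx}\|_{PC^1[0,1]}$. Standing assumptions: $\theta,\sigma,\lambda\in PC^1[0,1]$ with $\inf_{x\in[0,1]}\theta(x)>0$; $\varphi\in C^1([0,1];C^1[0,1])$ is a kernel $\varphi(x,\tilde x)$; $\alpha_0,\beta_0,\alpha_1,\beta_1$ are real constants. $\mathcal I$ is the set of all points of $[0,1]$ at which at least one of $\theta,\sigma,\lambda$ is not differentiable. For $w\in H^2(0,1)$, $\mathscr Pw(x)=\theta(x)w_{xx}(x)+\sigma(x)w_x(x)+\lambda(x)w(x)+\int_0^x\varphi(x,\tilde x)w(\tilde x)d\tilde x$. Discretization: for $n\ge1$ let $h=1/(n+1)$, $r_0=\alpha_0/(3\alpha_0-2h\beta_0)$, $r_1=\alpha_1/(3\alpha_1+2h\beta_1)$, $q_0=-\beta_0/(\alpha_0-h\beta_0)$, $b_n=2h\theta(nh)/(3\alpha_1+2h\beta_1)$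 (assumed well defined for all $n$). Define $n\times n$ matrices $\Theta_n=\mathrm{diag}(\theta(h),\dots,\theta(nh))$, $\Sigma_n=\mathrm{diag}(\sigma(h),\dots,\sigma(nh))$, $\Lambda_n=\mathrm{diag}(\lambda(h),\dots,\lambda(nh))$; $L_n=h^{-2}M$ where $M$ is tridiagonal with diagonal entries $-2$ except $M_{11}=4r_0-2$, $M_{nn}=4r_1-2$, superdiagonal entries $1$ except $M_{12}=1-r_0$, subdiagonal entries $1$ except $M_{n,n-1}=1-r_1$; $D_n=h^{-1}N$ where $N_{11}=hq_0$, $N_{1j}=0$ for $j\ge2$, and for $i\ge2$: $N_{ii}=1$, $N_{i,i-1}=-1$, other entries $0$; $\Phi_n$ is lower triangular with $(\Phi_n)_{jm}=h\varphi(jh,mh)$ for $m\le j$. Set $P_n=\Theta_nL_n+\Sigma_nD_n+\Lambda_n+\Phi_n$ and $B_n=h^{-2}(0,\dots,0,b_n)^\top\in\mathbb R^n$. For $v\in\mathbb R^n$, $\|v\|_{2d}=\sqrt h\,\|v\|_2$ (Euclidean norm). For $z\in PC[0,1]$, $R_nz=(z(h),z(2h),\dots,z(nh))^\top$. *)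

theory Defs
  imports "HOL-Analysis.Analysis"
begin

definition Ck_chain :: "nat \<Rightarrow> (real \<Rightarrow> real) \<Rightarrow> real set \<Rightarrow> (nat \<Rightarrow> real \<Rightarrow> real) \<Rightarrow> bool" where
  "Ck_chain k f S D \<longleftrightarrow> D 0 = f \<and> (\<forall>j\<le>k. continuous_on S (D j)) \<and>
     (\<forall>j<k. \<forall>x\<in>S. (D j has_real_derivative D (Suc j) x) (at x within S))"

definition Ck_on :: "nat \<Rightarrow> (real \<Rightarrow> real) \<Rightarrow> real set \<Rightarrow> bool" where
  "Ck_on k f S \<longleftrightarrow> (\<exists>D. Ck_chain k f S D)"

text \<open>C^k norm on S: sum over j \<le> k of sup |f^(j)|. (On a nondegenerate interval the
  derivatives are unique; the Inf only matters for degenerate intervals [a,a], where it gives |f a|.)\<close>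
definition Ck_norm :: "nat \<Rightarrow> (real \<Rightarrow> real) \<Rightarrow> real set \<Rightarrow> real" where
  "Ck_norm k f S = Inf {(\<Sum>j\<le>k. (SUP x\<in>S. \<bar>D j x\<bar>)) | D. Ck_chain k f S D}"

definition PCk :: "nat \<Rightarrow> (real \<Rightarrow> real) \<Rightarrow> bool" where
  "PCk k \<psi> \<longleftrightarrow> (\<exists>P. finite P \<and> \<Union>P = {0..1} \<and> pairwise disjnt P \<and>
     (\<forall>I\<in>P. is_interval I \<and> (\<exists>g. Ck_on k g {0..1} \<and> (\<forall>x\<in>I. \<psi> x = g x))))"

definition PCk_norm :: "nat \<Rightarrow> (real \<Rightarrow> real) \<Rightarrow> real" where
  "PCk_norm k \<psi> = Sup {Ck_norm k \<psi> {a..b} | a b. 0 \<le> a \<and> a \<le> b \<and> b \<le> 1 \<and> Ck_on k \<psi> {a..b}}"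

text \<open>PC^{(2),1}[0,1]: \<psi> \<in> C^1[0,1] with derivative \<psi>x, \<psi> \<in> H^2(0,1) with second (weak)
  derivative \<psi>xx, i.e. \<psi>x(x) = \<psi>x(0) + \<integral>_0^x \<psi>xx, and \<psi>xx \<in> PC^1[0,1].\<close>
definition PC21 :: "(real \<Rightarrow> real) \<Rightarrow> (real \<Rightarrow> real) \<Rightarrow> (real \<Rightarrow> real) \<Rightarrow> bool" where
  "PC21 \<psi> \<psi>x \<psi>xx \<longleftrightarrow> Ck_on 1 \<psi> {0..1} \<and>
     (\<forall>x\<in>{0..1}. (\<psi> has_real_derivative \<psi>x x) (at x within {0..1})) \<and>
     (\<forall>x\<in>{0..1}. (\<psi>xx has_integral (\<psi>x x - \<psi>x 0)) {0..x}) \<and>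
     PCk 1 \<psi>xx"

definition PC21_norm :: "(real \<Rightarrow> real) \<Rightarrow> (real \<Rightarrow> real) \<Rightarrow> real" where
  "PC21_norm \<psi> \<psi>xx = Ck_norm 1 \<psi> {0..1} + PCk_norm 1 \<psi>xx"

text \<open>Kernel \<phi> \<in> C^1([0,1]; C^1[0,1]), \<phi>(x,x') = \<phi> x x'.\<close>
definition kernel_C1C1 :: "(real \<Rightarrow> real \<Rightarrow> real) \<Rightarrow> bool" where
  "kernel_C1C1 \<phi> \<longleftrightarrow> (\<exists>\<Phi>'. (\<forall>x\<in>{0..1}. Ck_on 1 (\<phi> x) {0..1} \<and> Ck_on 1 (\<Phi>' x) {0..1}) \<and>
     (\<forall>x\<in>{0..1}. ((\<lambda>y. Ck_norm 1 (\<lambda>s. \<phi> y s - \<phi> x s - (y - x) * \<Phi>' x s) {0..1} / \<bar>y - x\<bar>)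
                     \<longlongrightarrow> 0) (at x within {0..1})) \<and>
     (\<forall>x\<in>{0..1}. ((\<lambda>y. Ck_norm 1 (\<lambda>s. \<Phi>' y s - \<Phi>' x s) {0..1}) \<longlongrightarrow> 0) (at x within {0..1})))"

definition Iset :: "(real \<Rightarrow> real) \<Rightarrow> (real \<Rightarrow> real) \<Rightarrow> (real \<Rightarrow> real) \<Rightarrow> real set" where
  "Iset \<theta> \<sigma> lam = {x\<in>{0..1}. \<not> \<theta> differentiable (at x within {0..1}) \<or>
       \<not> \<sigma> differentiable (at x within {0..1}) \<or> \<not> lam differentiable (at x within {0..1})}"

definition Pop :: "(real \<Rightarrow> real) \<Rightarrow> (real \<Rightarrow> real) \<Rightarrow> (real \<Rightarrow> real) \<Rightarrow> (real \<Rightarrow> real \<Rightarrow> real)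
     \<Rightarrow> (real \<Rightarrow> real) \<Rightarrow> (real \<Rightarrow> real) \<Rightarrow> (real \<Rightarrow> real) \<Rightarrow> real \<Rightarrow> real" where
  "Pop \<theta> \<sigma> lam \<phi> w wx wxx x = \<theta> x * wxx x + \<sigma> x * wx x + lam x * w x
      + integral {0..x} (\<lambda>s. \<phi> x s * w s)"

section \<open>Discretization (vectors/matrices indexed by 1..n)\<close>

definition hstep :: "nat \<Rightarrow> real" where "hstep n = 1 / (real n + 1)"

definition r0 :: "real \<Rightarrow> real \<Rightarrow> nat \<Rightarrow> real" where
  "r0 \<alpha>0 \<beta>0 n = \<alpha>0 / (3 * \<alpha>0 - 2 * hstep n * \<beta>0)"
definition r1 :: "real \<Rightarrow> real \<Rightarrow> nat \<Rightarrow> real" where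
  "r1 \<alpha>1 \<beta>1 n = \<alpha>1 / (3 * \<alpha>1 + 2 * hstep n * \<beta>1)"
definition q0 :: "real \<Rightarrow> real \<Rightarrow> nat \<Rightarrow> real" where
  "q0 \<alpha>0 \<beta>0 n = - \<beta>0 / (\<alpha>0 - hstep n * \<beta>0)"
definition bn :: "(real \<Rightarrow> real) \<Rightarrow> real \<Rightarrow> real \<Rightarrow> nat \<Rightarrow> real" where
  "bn \<theta> \<alpha>1 \<beta>1 n = 2 * hstep n * \<theta> (real n * hstep n) / (3 * \<alpha>1 + 2 * hstep n * \<beta>1)"

definition Mmat :: "real \<Rightarrow> real \<Rightarrow> real \<Rightarrow> real \<Rightarrow> nat \<Rightarrow> nat \<Rightarrow> nat \<Rightarrow> real" where
  "Mmat \<alpha>0 \<beta>0 \<alpha>1 \<beta>1 n i j =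
     (if i = j then (if i = 1 then 4 * r0 \<alpha>0 \<beta>0 n - 2 else if i = n then 4 * r1 \<alpha>1 \<beta>1 n - 2 else -2)
      else if j = i + 1 then (if i = 1 then 1 - r0 \<alpha>0 \<beta>0 n else 1)
      else if i = j + 1 then (if i = n then 1 - r1 \<alpha>1 \<beta>1 n else 1)
      else 0)"

definition Lmat :: "real \<Rightarrow> real \<Rightarrow> real \<Rightarrow> real \<Rightarrow> nat \<Rightarrow> nat \<Rightarrow> nat \<Rightarrow> real" where
  "Lmat \<alpha>0 \<beta>0 \<alpha>1 \<beta>1 n i j = Mmat \<alpha>0 \<beta>0 \<alpha>1 \<beta>1 n i j / (hstep n)\<^sup>2"

definition Nmat :: "real \<Rightarrow> real \<Rightarrow> nat \<Rightarrow> nat \<Rightarrow> nat \<Rightarrow> real" where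
  "Nmat \<alpha>0 \<beta>0 n i j =
     (if i = 1 then (if j = 1 then hstep n * q0 \<alpha>0 \<beta>0 n else 0)
      else if j = i then 1 else if j + 1 = i then -1 else 0)"

definition Dmat :: "real \<Rightarrow> real \<Rightarrow> nat \<Rightarrow> nat \<Rightarrow> nat \<Rightarrow> real" where
  "Dmat \<alpha>0 \<beta>0 n i j = Nmat \<alpha>0 \<beta>0 n i j / hstep n"

definition Phimat :: "(real \<Rightarrow> real \<Rightarrow> real) \<Rightarrow> nat \<Rightarrow> nat \<Rightarrow> nat \<Rightarrow> real" where
  "Phimat \<phi> n j m = (if m \<le> j then hstep n * \<phi> (real j * hstep n) (real m * hstep n) else 0)"

definition Pmat :: "(real \<Rightarrow> real) \<Rightarrow> (real \<Rightarrow> real) \<Rightarrow> (real \<Rightarrow> real) \<Rightarrow> (real \<Rightarrow> real \<Rightarrow> real)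
     \<Rightarrow> real \<Rightarrow> real \<Rightarrow> real \<Rightarrow> real \<Rightarrow> nat \<Rightarrow> nat \<Rightarrow> nat \<Rightarrow> real" where
  "Pmat \<theta> \<sigma> lam \<phi> \<alpha>0 \<beta>0 \<alpha>1 \<beta>1 n i j =
     \<theta> (real i * hstep n) * Lmat \<alpha>0 \<beta>0 \<alpha>1 \<beta>1 n i j
     + \<sigma> (real i * hstep n) * Dmat \<alpha>0 \<beta>0 n i j
     + (if i = j then lam (real i * hstep n) else 0)
     + Phimat \<phi> n i j"

definition Bvec :: "(real \<Rightarrow> real) \<Rightarrow> real \<Rightarrow> real \<Rightarrow> nat \<Rightarrow> nat \<Rightarrow> real" where
  "Bvec \<theta> \<alpha>1 \<beta>1 n i = (if i = n then bn \<theta> \<alpha>1 \<beta>1 n / (hstep n)\<^sup>2 else 0)"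

definition Rn :: "nat \<Rightarrow> (real \<Rightarrow> real) \<Rightarrow> nat \<Rightarrow> real" where
  "Rn n z i = z (real i * hstep n)"

definition matvec :: "nat \<Rightarrow> (nat \<Rightarrow> nat \<Rightarrow> real) \<Rightarrow> (nat \<Rightarrow> real) \<Rightarrow> nat \<Rightarrow> real" where
  "matvec n A v i = (\<Sum>j=1..n. A i j * v j)"

definition norm2d :: "nat \<Rightarrow> (nat \<Rightarrow> real) \<Rightarrow> real" where
  "norm2d n v = sqrt (hstep n) * sqrt (\<Sum>i=1..n. (v i)\<^sup>2)"

end

(*
  For fixed t write psi = xi(., t) and |psi| for its PC^(2),1 norm.  Row i of P_n R_n psi consists of
  theta(x_i) times a second difference, sigma(x_i) times a backward difference, lambda(x_i) psi(x_i)
  and a left Riemann sum for the Volterra integral, so the truncation error at x_i = i h combines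
  three residuals.  Taylor expansion with the Lipschitz derivative psi_x bounds each of them by
  O(|psi|); in the boundary rows this relies on the Robin conditions, through which psi(0) and psi(1)
  are eliminated to second order.  Away from the finitely many points of I the second derivative
  psi_xx is Lipschitz on [x_i - h, x_i + h], and every residual is O(h |psi|).  Since at most
  2 + 3 card I rows are exceptional and n h^2 <= 1, the discrete norm sqrt h |.|_2 of the truncation
  error is O(sqrt h |psi|).  The constant is uniform in t because t |-> |xi(., t)| is bounded on the
  compact interval [rho, T], and because theta, sigma and the kernel phi are bounded (and phi is
  uniformly Lipschitz in its second argument) by compactness of [0, 1].
*)
theory Submission
  imports Defs
begin

section \<open>\<open>C\<^sup>k\<close> norms on intervals\<close>

lemma Ck_chain_bdd_above:
  assumes "Ck_chain k f {a..b} D" "j \<le> k"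
  shows "bdd_above ((\<lambda>x. \<bar>D j x\<bar>) ` {a..b})"
proof -
  have "continuous_on {a..b} (\<lambda>x. \<bar>D j x\<bar>)"
    using assms unfolding Ck_chain_def by (auto intro: continuous_intros)
  then show ?thesis
    by (intro bounded_imp_bdd_above compact_imp_bounded compact_continuous_image) auto
qed

lemma Ck_chain_le_SUP:
  assumes "Ck_chain k f {a..b} D" "j \<le> k" "x \<in> {a..b}"
  shows "\<bar>D j x\<bar> \<le> (SUP y\<in>{a..b}. \<bar>D j y\<bar>)"
  by (rule cSUP_upper[OF assms(3) Ck_chain_bdd_above[OF assms(1,2)]])

lemma Ck_norm_le_chain:
  assumes "Ck_chain k f {a..b} D" "a \<le> b"
  shows "Ck_norm k f {a..b} \<le> (\<Sum>j\<le>k. SUP x\<in>{a..b}. \<bar>D j x\<bar>)"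
proof -
  have "0 \<le> (\<Sum>j\<le>k. SUP x\<in>{a..b}. \<bar>E j x\<bar>)" if "Ck_chain k f {a..b} E" for E
    using Ck_chain_le_SUP[OF that _, of _ a] assms(2) by (intro sum_nonneg) force
  then show ?thesis
    unfolding Ck_norm_def using assms(1) by (intro cInf_lower) (auto intro!: bdd_belowI[where m=0])
qed

lemma abs_le_Ck_norm:
  assumes "Ck_on k f {a..b}" "x \<in> {a..b}" "j \<le> k"
    and "\<And>D. Ck_chain k f {a..b} D \<Longrightarrow> D j x = c"
  shows "\<bar>c\<bar> \<le> Ck_norm k f {a..b}"
  unfolding Ck_norm_def
proof (rule cInf_greatest)
  show "{\<Sum>j\<le>k. SUP x\<in>{a..b}. \<bar>D j x\<bar> |D. Ck_chain k f {a..b} D} \<noteq> {}"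
    using assms(1) unfolding Ck_on_def by auto
next
  fix s assume "s \<in> {\<Sum>j\<le>k. SUP x\<in>{a..b}. \<bar>D j x\<bar> |D. Ck_chain k f {a..b} D}"
  then obtain D where D: "Ck_chain k f {a..b} D" and s: "s = (\<Sum>j\<le>k. SUP x\<in>{a..b}. \<bar>D j x\<bar>)"
    by auto
  have "\<bar>c\<bar> \<le> (SUP x\<in>{a..b}. \<bar>D j x\<bar>)"
    using Ck_chain_le_SUP[OF D assms(3,2)] assms(4)[OF D] by simp
  also have "\<dots> \<le> s"
    unfolding s using assms(2,3) Ck_chain_le_SUP[OF D _ assms(2)]
    by (intro member_le_sum) (auto intro: order_trans[OF abs_ge_zero])
  finally show "\<bar>c\<bar> \<le> s" .
qed

lemma abs_value_le_Ck_norm: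
  assumes "Ck_on k f {a..b}" "x \<in> {a..b}"
  shows "\<bar>f x\<bar> \<le> Ck_norm k f {a..b}"
  using assms by (intro abs_le_Ck_norm[where j=0]) (auto simp: Ck_chain_def)

lemma Ck_norm_nonneg: "Ck_on k f {a..b} \<Longrightarrow> a \<le> b \<Longrightarrow> 0 \<le> Ck_norm k f {a..b}"
  using abs_value_le_Ck_norm[of k f a b a] by force

lemma abs_derivative_le_Ck_norm:
  assumes "Ck_on k f {a..b}" "1 \<le> k" "a < b" "x \<in> {a..b}"
    and "(f has_real_derivative d) (at x within {a..b})"
  shows "\<bar>d\<bar> \<le> Ck_norm k f {a..b}"
proof (rule abs_le_Ck_norm[OF assms(1,4,2)])
  fix D assume "Ck_chain k f {a..b} D"
  then have "(f has_real_derivative D 1 x) (at x within {a..b})"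
    using assms(2,4) unfolding Ck_chain_def by (metis One_nat_def less_le_trans zero_less_one)
  then show "D 1 x = d"
    using vector_derivative_unique_within_closed_interval[of a b x f] assms(3,4,5)
    by (simp add: has_real_derivative_iff_has_vector_derivative)
qed

lemma lipschitz_on_C1_norm:
  assumes "Ck_on 1 f {a..b}" "a \<le> b"
  shows "(Ck_norm 1 f {a..b})-lipschitz_on {a..b} f"
proof (cases "a < b")
  case True
  obtain D where D: "Ck_chain 1 f {a..b} D" using assms(1) unfolding Ck_on_def by blast
  then have der: "(f has_real_derivative D 1 x) (at x within {a..b})" if "x \<in> {a..b}" for x
    using that unfolding Ck_chain_def by auto
  show ?thesis
  proof (rule lipschitz_onI)
    fix s s' assume "s \<in> {a..b}" "s' \<in> {a..b}"
    then have "norm (f s - f s') \<le> Ck_norm 1 f {a..b} * norm (s - s')"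
      using der abs_derivative_le_Ck_norm[OF assms(1) _ True _ der]
      by (intro field_differentiable_bound[of "{a..b}" f "D 1"]) simp_all
    then show "dist (f s) (f s') \<le> Ck_norm 1 f {a..b} * dist s s'" by (simp add: dist_real_def)
  qed (rule Ck_norm_nonneg[OF assms])
next
  case False
  then show ?thesis
    by (intro lipschitz_onI Ck_norm_nonneg[OF assms]) (use assms(2) in \<open>auto simp: dist_real_def\<close>)
qed

lemma Ck_chain_degenerate: "Ck_chain 1 f {a..a} (\<lambda>j. if j = 0 then f else (\<lambda>_. 0))"
  unfolding Ck_chain_def
  by (auto simp: has_field_derivative_def has_derivative_within_singleton_iff bounded_linear_mult_right)

lemma Ck_on_degenerate: "Ck_on 1 f {a..a}"
  using Ck_chain_degenerate Ck_on_def by blast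

lemma Ck_norm_degenerate: "Ck_norm 1 f {a..a} \<le> \<bar>f a\<bar>"
  using Ck_norm_le_chain[OF Ck_chain_degenerate[of f a]] by simp

lemma Ck_chain_add_scaled:
  assumes "Ck_chain k f S D" "Ck_chain k g S E"
  shows "Ck_chain k (\<lambda>x. f x + c * g x) S (\<lambda>j x. D j x + c * E j x)"
  using assms unfolding Ck_chain_def by (auto intro!: continuous_intros derivative_eq_intros)

lemma Ck_on_add_scaled: "Ck_on k f S \<Longrightarrow> Ck_on k g S \<Longrightarrow> Ck_on k (\<lambda>x. f x + c * g x) S"
  unfolding Ck_on_def using Ck_chain_add_scaled by blast

lemma Ck_on_diff: "Ck_on k f S \<Longrightarrow> Ck_on k g S \<Longrightarrow> Ck_on k (\<lambda>x. f x - g x) S"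
  using Ck_on_add_scaled[of k f S g "-1"] by simp

lemma Ck_chain_subset: "Ck_chain k f S D \<Longrightarrow> T \<subseteq> S \<Longrightarrow> Ck_chain k f T D"
  unfolding Ck_chain_def by (auto intro: continuous_on_subset) (meson DERIV_subset subsetD)

lemma Ck_on_subset: "Ck_on k f S \<Longrightarrow> T \<subseteq> S \<Longrightarrow> Ck_on k f T"
  unfolding Ck_on_def using Ck_chain_subset by blast

lemma Ck_on_cong:
  assumes "Ck_on k g S" "\<And>x. x \<in> S \<Longrightarrow> f x = g x"
  shows "Ck_on k f S"
proof -
  obtain D where D: "Ck_chain k g S D" using assms(1) unfolding Ck_on_def by blast
  have D0: "D 0 = g" using D unfolding Ck_chain_def by simp
  have "(f has_real_derivative D 1 x) (at x within S)" if "x \<in> S" "0 < k" for x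
  proof (rule has_field_derivative_transform_within[OF _ zero_less_one that(1)])
    show "(D 0 has_real_derivative D 1 x) (at x within S)"
      using D that unfolding Ck_chain_def by auto
  qed (use D0 assms(2) in auto)
  moreover have "continuous_on S f"
    using D D0 assms(2) unfolding Ck_chain_def by (metis continuous_on_cong le0)
  ultimately have "Ck_chain k f S (\<lambda>j. if j = 0 then f else D j)"
    using D unfolding Ck_chain_def by auto
  then show ?thesis unfolding Ck_on_def by blast
qed

lemma Ck_norm_add_scaled_le_chains:
  assumes D: "Ck_chain k f {a..b} D" and E: "Ck_chain k g {a..b} E" and ab: "a \<le> b"
  shows "Ck_norm k (\<lambda>x. f x + c * g x) {a..b}
    \<le> (\<Sum>j\<le>k. SUP x\<in>{a..b}. \<bar>D j x\<bar>) + \<bar>c\<bar> * (\<Sum>j\<le>k. SUP x\<in>{a..b}. \<bar>E j x\<bar>)"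
proof -
  have "Ck_norm k (\<lambda>x. f x + c * g x) {a..b} \<le> (\<Sum>j\<le>k. SUP x\<in>{a..b}. \<bar>D j x + c * E j x\<bar>)"
    by (rule Ck_norm_le_chain[OF Ck_chain_add_scaled[OF D E] ab])
  also have "\<dots> \<le> (\<Sum>j\<le>k. (SUP x\<in>{a..b}. \<bar>D j x\<bar>) + \<bar>c\<bar> * (SUP x\<in>{a..b}. \<bar>E j x\<bar>))"
  proof (intro sum_mono cSUP_least)
    fix j x assume "j \<in> {..k}" "x \<in> {a..b}"
    have "\<bar>D j x + c * E j x\<bar> \<le> \<bar>D j x\<bar> + \<bar>c\<bar> * \<bar>E j x\<bar>"
      using abs_triangle_ineq[of "D j x" "c * E j x"] by (simp add: abs_mult)
    also have "\<dots> \<le> (SUP x\<in>{a..b}. \<bar>D j x\<bar>) + \<bar>c\<bar> * (SUP x\<in>{a..b}. \<bar>E j x\<bar>)"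
      using Ck_chain_le_SUP[OF D, of j x] Ck_chain_le_SUP[OF E, of j x] \<open>j \<in> {..k}\<close> \<open>x \<in> {a..b}\<close>
      by (intro add_mono mult_left_mono) auto
    finally show "\<bar>D j x + c * E j x\<bar> \<le> (SUP x\<in>{a..b}. \<bar>D j x\<bar>) + \<bar>c\<bar> * (SUP x\<in>{a..b}. \<bar>E j x\<bar>)" .
  qed (use ab in auto)
  also have "\<dots> = (\<Sum>j\<le>k. SUP x\<in>{a..b}. \<bar>D j x\<bar>) + \<bar>c\<bar> * (\<Sum>j\<le>k. SUP x\<in>{a..b}. \<bar>E j x\<bar>)"
    by (simp add: sum.distrib sum_distrib_left)
  finally show ?thesis .
qed

lemma Ck_norm_add_scaled_le:
  assumes f: "Ck_on k f {a..b}" and g: "Ck_on k g {a..b}" and ab: "a \<le> b"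
  shows "Ck_norm k (\<lambda>x. f x + c * g x) {a..b} \<le> Ck_norm k f {a..b} + \<bar>c\<bar> * Ck_norm k g {a..b}"
proof -
  let ?S = "\<lambda>h. {\<Sum>j\<le>k. SUP x\<in>{a..b}. \<bar>D j x\<bar> |D. Ck_chain k h {a..b} D}"
  have ne: "?S f \<noteq> {}" "?S g \<noteq> {}" using f g unfolding Ck_on_def by auto
  have bound: "Ck_norm k (\<lambda>x. f x + c * g x) {a..b} - \<bar>c\<bar> * t \<le> Ck_norm k f {a..b}"
    if t: "t \<in> ?S g" for t
    unfolding Ck_norm_def[of k f]
  proof (rule cInf_greatest[OF ne(1)])
    fix s assume "s \<in> ?S f"
    then obtain D where D: "Ck_chain k f {a..b} D" "s = (\<Sum>j\<le>k. SUP x\<in>{a..b}. \<bar>D j x\<bar>)" by auto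
    obtain E where E: "Ck_chain k g {a..b} E" "t = (\<Sum>j\<le>k. SUP x\<in>{a..b}. \<bar>E j x\<bar>)" using t by auto
    show "Ck_norm k (\<lambda>x. f x + c * g x) {a..b} - \<bar>c\<bar> * t \<le> s"
      using Ck_norm_add_scaled_le_chains[OF D(1) E(1) ab, of c] D(2) E(2) by simp
  qed
  have "Ck_norm k (\<lambda>x. f x + c * g x) {a..b} - Ck_norm k f {a..b} \<le> \<bar>c\<bar> * Ck_norm k g {a..b}"
  proof (cases "c = 0")
    case True
    obtain t where "t \<in> ?S g" using ne(2) by blast
    then show ?thesis using bound True by force
  next
    case False
    have "(Ck_norm k (\<lambda>x. f x + c * g x) {a..b} - Ck_norm k f {a..b}) / \<bar>c\<bar> \<le> Ck_norm k g {a..b}"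
      unfolding Ck_norm_def[of k g]
    proof (rule cInf_greatest[OF ne(2)])
      fix t assume t: "t \<in> ?S g"
      show "(Ck_norm k (\<lambda>x. f x + c * g x) {a..b} - Ck_norm k f {a..b}) / \<bar>c\<bar> \<le> t"
        using bound[OF t] False by (simp add: pos_divide_le_eq mult.commute)
    qed
    then show ?thesis using False by (simp add: pos_divide_le_eq mult.commute)
  qed
  then show ?thesis by linarith
qed

lemma Ck_norm_le_first_order:
  assumes "Ck_on k f {a..b}" "Ck_on k f0 {a..b}" "Ck_on k f1 {a..b}" "a \<le> b"
  shows "Ck_norm k f {a..b}
    \<le> Ck_norm k (\<lambda>s. f s - f0 s - c * f1 s) {a..b} + Ck_norm k f0 {a..b} + \<bar>c\<bar> * Ck_norm k f1 {a..b}"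
proof -
  have "Ck_on k (\<lambda>s. (f s - f0 s) + (- c) * f1 s) {a..b}"
    using assms(1-3) by (intro Ck_on_add_scaled Ck_on_diff)
  then have rem: "Ck_on k (\<lambda>s. f s - f0 s - c * f1 s) {a..b}" by (rule Ck_on_cong) simp
  have lin: "Ck_on k (\<lambda>s. f0 s + c * f1 s) {a..b}" using assms(2,3) by (rule Ck_on_add_scaled)
  have eq: "(\<lambda>s. (f s - f0 s - c * f1 s) + 1 * (f0 s + c * f1 s)) = f" by (simp add: fun_eq_iff)
  have "Ck_norm k f {a..b} \<le> Ck_norm k (\<lambda>s. f s - f0 s - c * f1 s) {a..b} + Ck_norm k (\<lambda>s. f0 s + c * f1 s) {a..b}"
    using Ck_norm_add_scaled_le[OF rem lin assms(4), of 1] unfolding eq by simp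
  also have "Ck_norm k (\<lambda>s. f0 s + c * f1 s) {a..b} \<le> Ck_norm k f0 {a..b} + \<bar>c\<bar> * Ck_norm k f1 {a..b}"
    by (rule Ck_norm_add_scaled_le[OF assms(2-4)])
  finally show ?thesis by simp
qed

section \<open>Piecewise \<open>C\<^sup>1\<close> functions\<close>

lemma continuous_abs_le_off_finite:
  fixes g :: "real \<Rightarrow> real"
  assumes "continuous_on {a..b} g" "a < b" "finite F"
    and "\<And>y. y \<in> {a<..<b} - F \<Longrightarrow> \<bar>g y\<bar> \<le> K" "x \<in> {a..b}"
  shows "\<bar>g x\<bar> \<le> K"
proof -
  have "x islimpt {a<..<b}" using limpt_of_closure[of x "{a<..<b}"] assms(2,5) by simp
  then have "x islimpt F \<union> ({a<..<b} - F)" by (rule islimpt_subset) auto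
  then have "x islimpt ({a<..<b} - F)" using islimpt_Un_finite[OF assms(3), of x "{a<..<b} - F"] by blast
  then have "x \<in> closure ({a<..<b} - F)" by (simp add: closure_def)
  moreover have "closure ({a<..<b} - F) \<subseteq> {a..b}"
    by (metis Diff_subset closure_greaterThanLessThan[OF assms(2)] closure_mono)
  then have "continuous_on (closure ({a<..<b} - F)) (\<lambda>x. \<bar>g x\<bar>)"
    by (rule continuous_on_subset[OF continuous_on_rabs[OF assms(1)]])
  ultimately show ?thesis
    using continuous_le_on_closure[of "{a<..<b} - F" "\<lambda>x. \<bar>g x\<bar>" x K] assms(4) by blast
qed

lemma is_interval_Icc_around:
  fixes I :: "real set"
  assumes "is_interval I" "bdd_below I" "bdd_above I" "y \<in> I" "y \<noteq> Inf I" "y \<noteq> Sup I"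
  obtains \<delta> where "\<delta> > 0" "{y-\<delta>..y+\<delta>} \<subseteq> I"
proof -
  have "Inf I \<le> y" "y \<le> Sup I"
    using assms(2-4) by (auto intro: cInf_lower cSup_upper)
  then have lt: "Inf I < y" "y < Sup I" using assms(5,6) by auto
  obtain a where a: "a \<in> I" "a < y" using cInf_lessD[OF _ lt(1)] assms(4) by blast
  obtain b where b: "b \<in> I" "y < b" using less_cSupD[OF _ lt(2)] assms(4) by blast
  have ab: "x \<in> I" if "x \<in> {a..b}" for x
    by (rule is_interval_1[THEN iffD1, OF assms(1), rule_format, of a b x]) (use a(1) b(1) that in auto)
  define \<delta> where "\<delta> = min (y - a) (b - y)"
  have "a \<le> y - \<delta>" "y + \<delta> \<le> b" "\<delta> > 0" using a(2) b(2) by (auto simp: \<delta>_def)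
  then show ?thesis using ab by (intro that[of \<delta>]) auto
qed

definition PC1_witness :: "(real \<Rightarrow> real) \<Rightarrow> real set \<Rightarrow> real \<Rightarrow> real \<Rightarrow> bool" where
  "PC1_witness \<psi> F B K \<longleftrightarrow> finite F \<and> 0 \<le> K \<and> (\<forall>x\<in>{0..1}. \<bar>\<psi> x\<bar> \<le> B) \<and>
     (\<forall>y\<in>{0<..<1} - F. (\<exists>\<delta>>0. 0 \<le> y - \<delta> \<and> y + \<delta> \<le> 1 \<and> Ck_on 1 \<psi> {y-\<delta>..y+\<delta>}) \<and>
        (\<forall>d. (\<psi> has_real_derivative d) (at y) \<longrightarrow> \<bar>d\<bar> \<le> K))"

lemma C1_on_Icc_around_has_derivative:
  assumes "Ck_on 1 \<psi> {y-\<delta>..y+\<delta>}" "\<delta> > 0"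
  obtains d where "(\<psi> has_real_derivative d) (at y)"
proof -
  obtain D where D: "Ck_chain 1 \<psi> {y-\<delta>..y+\<delta>} D" using assms(1) unfolding Ck_on_def by blast
  then have "(\<psi> has_real_derivative D 1 y) (at y within {y-\<delta>..y+\<delta>})"
    using assms(2) unfolding Ck_chain_def by auto
  moreover have "at y within {y-\<delta>..y+\<delta>} = at y" using assms(2) by (intro at_within_Icc_at) auto
  ultimately show ?thesis using that by simp
qed

lemma PC1_witness_has_derivative:
  assumes "PC1_witness \<psi> F B K" "y \<in> {0<..<1} - F"
  obtains d where "(\<psi> has_real_derivative d) (at y)" "\<bar>d\<bar> \<le> K"
proof -
  obtain \<delta> where "Ck_on 1 \<psi> {y-\<delta>..y+\<delta>}" "\<delta> > 0" using assms unfolding PC1_witness_def by blast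
  then obtain d where "(\<psi> has_real_derivative d) (at y)" by (rule C1_on_Icc_around_has_derivative)
  moreover have "\<forall>d. (\<psi> has_real_derivative d) (at y) \<longrightarrow> \<bar>d\<bar> \<le> K"
    using assms unfolding PC1_witness_def by auto
  ultimately show thesis using that by blast
qed

lemma C1_piece_interior:
  assumes g: "Ck_on 1 g {0..1}" and eq: "\<forall>x\<in>I. \<psi> x = g x"
    and I: "is_interval I" "I \<subseteq> {0..1}" and y: "y \<in> I" "y \<noteq> Inf I" "y \<noteq> Sup I"
  shows "\<exists>\<delta>>0. 0 \<le> y - \<delta> \<and> y + \<delta> \<le> 1 \<and> Ck_on 1 \<psi> {y-\<delta>..y+\<delta>}"
    and "(\<psi> has_real_derivative d) (at y) \<Longrightarrow> \<bar>d\<bar> \<le> Ck_norm 1 g {0..1}"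
proof -
  have bdd: "bdd_below I" "bdd_above I"
    using I(2) by (meson atLeastAtMost_iff bdd_belowI bdd_aboveI subsetD)+
  obtain \<delta> where \<delta>: "\<delta> > 0" "{y-\<delta>..y+\<delta>} \<subseteq> I" using is_interval_Icc_around[OF I(1) bdd y] .
  have sub: "{y-\<delta>..y+\<delta>} \<subseteq> {0..1}" using \<delta>(2) I(2) by blast
  have "Ck_on 1 \<psi> {y-\<delta>..y+\<delta>}"
    by (rule Ck_on_cong[OF Ck_on_subset[OF g sub]]) (use eq \<delta>(2) in auto)
  then show "\<exists>\<delta>>0. 0 \<le> y - \<delta> \<and> y + \<delta> \<le> 1 \<and> Ck_on 1 \<psi> {y-\<delta>..y+\<delta>}" using \<delta>(1) sub by auto
  assume d: "(\<psi> has_real_derivative d) (at y)"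
  have "{y-\<delta><..<y+\<delta>} \<subseteq> I" by (rule order_trans[OF _ \<delta>(2)]) auto
  then have "(g has_real_derivative d) (at y)"
    using eq \<delta>(1) by (intro has_field_derivative_transform_within_open[OF d, of "{y-\<delta><..<y+\<delta>}"]) auto
  then show "\<bar>d\<bar> \<le> Ck_norm 1 g {0..1}"
    using g y(1) I(2) by (intro abs_derivative_le_Ck_norm[where x=y]) (auto intro: has_field_derivative_at_within)
qed

lemma PCk_imp_PC1_witness:
  assumes "PCk 1 \<psi>"
  obtains F B K where "PC1_witness \<psi> F B K"
proof -
  obtain P where P: "finite P" "\<Union>P = {0..1}"
    "\<forall>I\<in>P. is_interval I \<and> (\<exists>g. Ck_on 1 g {0..1} \<and> (\<forall>x\<in>I. \<psi> x = g x))"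
    using assms unfolding PCk_def by blast
  then obtain g where g: "\<And>I. I \<in> P \<Longrightarrow> Ck_on 1 (g I) {0..1}" "\<And>I. I \<in> P \<Longrightarrow> \<forall>x\<in>I. \<psi> x = g I x"
    by metis
  define B where "B = (\<Sum>I\<in>P. Ck_norm 1 (g I) {0..1})"
  have gB: "Ck_norm 1 (g I) {0..1} \<le> B" if "I \<in> P" for I
    unfolding B_def using P(1) that g Ck_norm_nonneg by (intro member_le_sum) auto
  define F where "F = (\<Union>I\<in>P. {Inf I, Sup I})"
  have val: "\<bar>\<psi> x\<bar> \<le> B" if "x \<in> {0..1}" for x
  proof -
    have "x \<in> \<Union>P" using P(2) that by simp
    then obtain I where "I \<in> P" "x \<in> I" by blast
    then show ?thesis
      using g abs_value_le_Ck_norm[of 1 "g I" 0 1 x] gB that by force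
  qed
  have loc: "(\<exists>\<delta>>0. 0 \<le> y - \<delta> \<and> y + \<delta> \<le> 1 \<and> Ck_on 1 \<psi> {y-\<delta>..y+\<delta>}) \<and>
      (\<forall>d. (\<psi> has_real_derivative d) (at y) \<longrightarrow> \<bar>d\<bar> \<le> B)" if y: "y \<in> {0<..<1} - F" for y
  proof -
    have "y \<in> \<Union>P" using P(2) y by simp
    then obtain I where I: "I \<in> P" "y \<in> I" by blast
    have piece: "is_interval I" "I \<subseteq> {0..1}" "y \<noteq> Inf I" "y \<noteq> Sup I"
      using P I y by (auto simp: F_def)
    show ?thesis
      using C1_piece_interior[OF g(1,2)[OF I(1)] piece(1,2) I(2) piece(3,4)] gB[OF I(1)] by force
  qed
  have "0 \<le> B" using val[of 0] by simp
  then show thesis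
    using P(1) val loc by (intro that[of F B B]) (auto simp: PC1_witness_def F_def)
qed

lemma C1_norm_le_off_finite:
  assumes "finite F" "\<forall>x\<in>{0..1}. \<bar>w x\<bar> \<le> A"
    and "\<forall>y\<in>{0<..<1} - F. \<forall>d. (w has_real_derivative d) (at y) \<longrightarrow> \<bar>d\<bar> \<le> A'"
    and "0 \<le> A'" "0 \<le> a" "a \<le> b" "b \<le> 1" "Ck_on 1 w {a..b}"
  shows "Ck_norm 1 w {a..b} \<le> A + A'"
proof (cases "a = b")
  case True
  then show ?thesis using Ck_norm_degenerate[of w a] assms(2,4,5,7) by force
next
  case False
  obtain D where D: "Ck_chain 1 w {a..b} D" using assms(8) unfolding Ck_on_def by blast
  have D0: "D 0 = w" using D unfolding Ck_chain_def by auto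
  have "(SUP x\<in>{a..b}. \<bar>D 1 x\<bar>) \<le> A'"
  proof (rule cSUP_least)
    fix x assume x: "x \<in> {a..b}"
    show "\<bar>D 1 x\<bar> \<le> A'"
    proof (rule continuous_abs_le_off_finite[OF _ _ assms(1) _ x])
      fix y assume y: "y \<in> {a<..<b} - F"
      have "(w has_real_derivative D 1 y) (at y within {a..b})"
        using D D0 y unfolding Ck_chain_def by auto
      then have "(w has_real_derivative D 1 y) (at y)" using y at_within_Icc_at[of a y b] by auto
      then show "\<bar>D 1 y\<bar> \<le> A'" using assms(3,5,7) y by auto
    qed (use D False assms(6) in \<open>auto simp: Ck_chain_def\<close>)
  qed (use assms(6) in auto)
  moreover have "(SUP x\<in>{a..b}. \<bar>D 0 x\<bar>) \<le> A"
    using assms(2,5,6,7) D0 by (intro cSUP_least) auto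
  ultimately show ?thesis using Ck_norm_le_chain[OF D assms(6)] by simp
qed

definition C1_piece_norms :: "(real \<Rightarrow> real) \<Rightarrow> real set" where
  "C1_piece_norms w = {Ck_norm 1 w {a..b} | a b. 0 \<le> a \<and> a \<le> b \<and> b \<le> 1 \<and> Ck_on 1 w {a..b}}"

lemma PCk_norm_eq_Sup: "PCk_norm 1 w = Sup (C1_piece_norms w)"
  by (simp add: PCk_norm_def C1_piece_norms_def)

lemma C1_piece_norms_memI:
  "0 \<le> a \<Longrightarrow> a \<le> b \<Longrightarrow> b \<le> 1 \<Longrightarrow> Ck_on 1 w {a..b} \<Longrightarrow> Ck_norm 1 w {a..b} \<in> C1_piece_norms w"
  unfolding C1_piece_norms_def by blast

lemma PCk_norm_le_off_finite:
  assumes "finite F" "\<forall>x\<in>{0..1}. \<bar>w x\<bar> \<le> A"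
    and "\<forall>y\<in>{0<..<1} - F. \<forall>d. (w has_real_derivative d) (at y) \<longrightarrow> \<bar>d\<bar> \<le> A'" "0 \<le> A'"
  shows "bdd_above (C1_piece_norms w)" "PCk_norm 1 w \<le> A + A'"
proof -
  have le: "\<forall>s\<in>C1_piece_norms w. s \<le> A + A'"
    unfolding C1_piece_norms_def using C1_norm_le_off_finite[OF assms] by auto
  then show "bdd_above (C1_piece_norms w)" by (intro bdd_aboveI) auto
  show "PCk_norm 1 w \<le> A + A'"
    unfolding PCk_norm_eq_Sup using le C1_piece_norms_memI[OF _ _ _ Ck_on_degenerate, of 0 w]
    by (intro cSup_least) auto
qed

lemma PC1_witness_bdd_above: "PC1_witness w F B K \<Longrightarrow> bdd_above (C1_piece_norms w)"
  unfolding PC1_witness_def by (intro PCk_norm_le_off_finite(1)[where F=F]) auto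

lemma PC1_witness_abs_le_PCk_norm:
  assumes "PC1_witness w F B K" "x \<in> {0..1}"
  shows "\<bar>w x\<bar> \<le> PCk_norm 1 w"
proof -
  have "\<bar>w x\<bar> \<le> Ck_norm 1 w {x..x}"
    by (rule abs_value_le_Ck_norm[OF Ck_on_degenerate]) simp
  also have "\<dots> \<le> PCk_norm 1 w"
    unfolding PCk_norm_eq_Sup using assms
    by (intro cSup_upper C1_piece_norms_memI Ck_on_degenerate PC1_witness_bdd_above) auto
  finally show ?thesis .
qed

lemma PC1_witness_deriv_le_PCk_norm:
  assumes "PC1_witness w F B K" "y \<in> {0<..<1} - F" "(w has_real_derivative d) (at y)"
  shows "\<bar>d\<bar> \<le> PCk_norm 1 w"
proof -
  obtain \<delta> where \<delta>: "\<delta> > 0" "0 \<le> y - \<delta>" "y + \<delta> \<le> 1" "Ck_on 1 w {y-\<delta>..y+\<delta>}"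
    using assms(1,2) unfolding PC1_witness_def by blast
  then have "\<bar>d\<bar> \<le> Ck_norm 1 w {y-\<delta>..y+\<delta>}"
    using assms(3) by (intro abs_derivative_le_Ck_norm[where x=y]) (auto intro: has_field_derivative_at_within)
  also have "\<dots> \<le> PCk_norm 1 w"
    unfolding PCk_norm_eq_Sup using assms \<delta>
    by (intro cSup_upper C1_piece_norms_memI PC1_witness_bdd_above) auto
  finally show ?thesis .
qed

lemma abs_le_PCk_norm:
  assumes "PCk 1 w" "x \<in> {0..1}"
  shows "\<bar>w x\<bar> \<le> PCk_norm 1 w"
proof -
  obtain F B K where "PC1_witness w F B K" using PCk_imp_PC1_witness[OF assms(1)] .
  then show ?thesis using PC1_witness_abs_le_PCk_norm assms(2) by blast
qed

lemma PCk_norm_nonneg: "PCk 1 w \<Longrightarrow> 0 \<le> PCk_norm 1 w"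
  using abs_le_PCk_norm[of w 0] by force

lemma PCk_finite_nondifferentiable:
  assumes "PCk 1 w"
  shows "finite {x\<in>{0..1}. \<not> w differentiable (at x within {0..1})}"
proof -
  obtain F B K where W: "PC1_witness w F B K" using PCk_imp_PC1_witness[OF assms] .
  have "w differentiable (at y within {0..1})" if y: "y \<in> {0<..<1} - F" for y
  proof -
    obtain d where "(w has_real_derivative d) (at y)" "\<bar>d\<bar> \<le> K"
      using PC1_witness_has_derivative[OF W y] .
    then show ?thesis unfolding real_differentiable_def by (blast intro: has_field_derivative_at_within)
  qed
  then have "x \<in> F \<union> {0, 1}" if "x \<in> {0..1}" "\<not> w differentiable (at x within {0..1})" for x
    using that by (cases "x \<in> F \<union> {0, 1}") auto
  then have "{x\<in>{0..1}. \<not> w differentiable (at x within {0..1})} \<subseteq> F \<union> {0, 1}"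
    by blast
  moreover have "finite F" using W unfolding PC1_witness_def by simp
  ultimately show ?thesis by (simp add: finite_subset)
qed

lemma PC1_witness_diff:
  assumes u: "PC1_witness u Fu Bu Ku" and w: "PC1_witness w Fw Bw Kw"
  shows "PC1_witness (\<lambda>x. w x - u x) (Fu \<union> Fw) (Bw + Bu) (Kw + Ku)"
  unfolding PC1_witness_def
proof (intro conjI ballI allI impI)
  show "finite (Fu \<union> Fw)" "0 \<le> Kw + Ku" using u w unfolding PC1_witness_def by auto
  show "\<bar>w x - u x\<bar> \<le> Bw + Bu" if "x \<in> {0..1}" for x
  proof -
    have "\<bar>w x\<bar> \<le> Bw" "\<bar>u x\<bar> \<le> Bu" using u w that unfolding PC1_witness_def by auto
    then show ?thesis by linarith
  qed
next
  fix y assume y: "y \<in> {0<..<1} - (Fu \<union> Fw)"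
  obtain \<delta>1 where d1: "\<delta>1 > 0" "0 \<le> y - \<delta>1" "y + \<delta>1 \<le> 1" "Ck_on 1 u {y-\<delta>1..y+\<delta>1}"
    using u y unfolding PC1_witness_def by blast
  obtain \<delta>2 where d2: "\<delta>2 > 0" "0 \<le> y - \<delta>2" "y + \<delta>2 \<le> 1" "Ck_on 1 w {y-\<delta>2..y+\<delta>2}"
    using w y unfolding PC1_witness_def by blast
  let ?\<delta> = "min \<delta>1 \<delta>2"
  have "{y-?\<delta>..y+?\<delta>} \<subseteq> {y-\<delta>1..y+\<delta>1}" "{y-?\<delta>..y+?\<delta>} \<subseteq> {y-\<delta>2..y+\<delta>2}" by auto
  then have "Ck_on 1 (\<lambda>x. w x - u x) {y-?\<delta>..y+?\<delta>}"
    using Ck_on_diff[OF Ck_on_subset[OF d2(4)] Ck_on_subset[OF d1(4)]] by blast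
  then show "\<exists>\<delta>>0. 0 \<le> y - \<delta> \<and> y + \<delta> \<le> 1 \<and> Ck_on 1 (\<lambda>x. w x - u x) {y - \<delta>..y + \<delta>}"
    using d1 d2 by (intro exI[of _ ?\<delta>]) auto
  fix d assume d: "((\<lambda>x. w x - u x) has_real_derivative d) (at y)"
  have yu: "y \<in> {0<..<1} - Fu" and yw: "y \<in> {0<..<1} - Fw" using y by auto
  obtain du where du: "(u has_real_derivative du) (at y)" "\<bar>du\<bar> \<le> Ku"
    using PC1_witness_has_derivative[OF u yu] .
  obtain dw where dw: "(w has_real_derivative dw) (at y)" "\<bar>dw\<bar> \<le> Kw"
    using PC1_witness_has_derivative[OF w yw] .
  have "d = dw - du" using DERIV_unique[OF d DERIV_diff[OF dw(1) du(1)]] .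
  then show "\<bar>d\<bar> \<le> Kw + Ku" using du(2) dw(2) by linarith
qed

text \<open>Values and derivatives of \<open>w\<close> are each bounded by the sum of the two norms, hence the 2.\<close>
lemma PCk_norm_quasi_triangle:
  assumes "PCk 1 u" "PCk 1 w"
  shows "PCk_norm 1 w \<le> 2 * (PCk_norm 1 u + PCk_norm 1 (\<lambda>x. w x - u x))"
proof -
  obtain Fu Bu Ku where u: "PC1_witness u Fu Bu Ku" using PCk_imp_PC1_witness[OF assms(1)] .
  obtain Fw Bw Kw where w: "PC1_witness w Fw Bw Kw" using PCk_imp_PC1_witness[OF assms(2)] .
  let ?v = "\<lambda>x. w x - u x"
  have v: "PC1_witness ?v (Fu \<union> Fw) (Bw + Bu) (Kw + Ku)" by (rule PC1_witness_diff[OF u w])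
  let ?A = "PCk_norm 1 u + PCk_norm 1 ?v"
  have "PCk_norm 1 w \<le> ?A + ?A"
  proof (rule PCk_norm_le_off_finite(2)[where F="Fu \<union> Fw"])
    show "finite (Fu \<union> Fw)" using u w unfolding PC1_witness_def by auto
    show "0 \<le> ?A"
      using PC1_witness_abs_le_PCk_norm[OF u, of 0] PC1_witness_abs_le_PCk_norm[OF v, of 0] by simp
    show "\<forall>x\<in>{0..1}. \<bar>w x\<bar> \<le> ?A"
    proof
      fix x :: real assume "x \<in> {0..1}"
      then have "\<bar>u x\<bar> \<le> PCk_norm 1 u" "\<bar>?v x\<bar> \<le> PCk_norm 1 ?v"
        using PC1_witness_abs_le_PCk_norm[OF u] PC1_witness_abs_le_PCk_norm[OF v] by auto
      then show "\<bar>w x\<bar> \<le> ?A" by linarith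
    qed
    show "\<forall>y\<in>{0<..<1} - (Fu \<union> Fw). \<forall>d. (w has_real_derivative d) (at y) \<longrightarrow> \<bar>d\<bar> \<le> ?A"
    proof (intro ballI allI impI)
      fix y d assume y: "y \<in> {0<..<1} - (Fu \<union> Fw)" and d: "(w has_real_derivative d) (at y)"
      have yu: "y \<in> {0<..<1} - Fu" using y by auto
      obtain du where du: "(u has_real_derivative du) (at y)"
        using PC1_witness_has_derivative[OF u yu] by blast
      have "\<bar>du\<bar> \<le> PCk_norm 1 u"
        using y by (intro PC1_witness_deriv_le_PCk_norm[OF u _ du]) auto
      moreover have "\<bar>d - du\<bar> \<le> PCk_norm 1 ?v"
        by (rule PC1_witness_deriv_le_PCk_norm[OF v y DERIV_diff[OF d du]])
      ultimately show "\<bar>d\<bar> \<le> ?A" by linarith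
    qed
  qed
  then show ?thesis by simp
qed

section \<open>Uniform bounds by compactness\<close>

lemma compact_locally_bounded_imp_bdd_above:
  fixes f :: "'a::metric_space \<Rightarrow> real"
  assumes "compact S" and "\<And>x. x \<in> S \<Longrightarrow> \<exists>d>0. \<exists>B. \<forall>y\<in>S. dist y x < d \<longrightarrow> f y \<le> B"
  shows "bdd_above (f ` S)"
proof -
  obtain d B where dB: "\<And>x. x \<in> S \<Longrightarrow> d x > 0 \<and> (\<forall>y\<in>S. dist y x < d x \<longrightarrow> f y \<le> B x)"
    using assms(2) by metis
  have "S \<subseteq> (\<Union>x\<in>S. ball x (d x))" using dB by force
  then obtain C where C: "C \<subseteq> S" "finite C" "S \<subseteq> (\<Union>x\<in>C. ball x (d x))"
    using compactE_image[OF assms(1), of S "\<lambda>x. ball x (d x)"] by auto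
  have "f y \<le> (\<Sum>x\<in>C. \<bar>B x\<bar>)" if y: "y \<in> S" for y
  proof -
    obtain x where x: "x \<in> C" "dist y x < d x"
      using C(3) y by (auto simp: dist_commute)
    then have "f y \<le> B x" using dB C(1) y by blast
    also have "\<dots> \<le> (\<Sum>x\<in>C. \<bar>B x\<bar>)"
      using member_le_sum[OF x(1), of "\<lambda>x. \<bar>B x\<bar>"] C(2) by simp
    finally show ?thesis .
  qed
  then show ?thesis by (intro bdd_aboveI2)
qed

lemma kernel_C1_norm_bdd_above:
  assumes "kernel_C1C1 \<phi>"
  shows "bdd_above ((\<lambda>x. Ck_norm 1 (\<phi> x) {0..1}) ` {0..1})"
proof (rule compact_locally_bounded_imp_bdd_above)
  fix x :: real assume x: "x \<in> {0..1}"
  obtain \<Phi>' where ck: "\<And>x. x \<in> {0..1} \<Longrightarrow> Ck_on 1 (\<phi> x) {0..1} \<and> Ck_on 1 (\<Phi>' x) {0..1}"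
    and lim: "((\<lambda>y. Ck_norm 1 (\<lambda>s. \<phi> y s - \<phi> x s - (y - x) * \<Phi>' x s) {0..1} / \<bar>y - x\<bar>)
                \<longlongrightarrow> 0) (at x within {0..1})"
    using assms x unfolding kernel_C1C1_def by blast
  have "\<forall>\<^sub>F y in at x within {0..1}.
      Ck_norm 1 (\<lambda>s. \<phi> y s - \<phi> x s - (y - x) * \<Phi>' x s) {0..1} / \<bar>y - x\<bar> < 1"
    by (rule order_tendstoD(2)[OF lim]) simp
  then obtain d where d: "d > 0" "\<And>y. y \<in> {0..1} \<Longrightarrow> y \<noteq> x \<Longrightarrow> dist y x < d \<Longrightarrow>
      Ck_norm 1 (\<lambda>s. \<phi> y s - \<phi> x s - (y - x) * \<Phi>' x s) {0..1} / \<bar>y - x\<bar> < 1"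
    unfolding eventually_at by blast
  have "Ck_norm 1 (\<phi> y) {0..1} \<le> 1 + Ck_norm 1 (\<phi> x) {0..1} + Ck_norm 1 (\<Phi>' x) {0..1}"
    if y: "y \<in> {0..1}" "dist y x < min d 1" for y
  proof (cases "y = x")
    case True
    then show ?thesis using Ck_norm_nonneg[of 1 "\<Phi>' x" 0 1] ck[OF x] by simp
  next
    case False
    have yx: "\<bar>y - x\<bar> \<le> 1" using y(2) by (simp add: dist_real_def)
    have "Ck_norm 1 (\<lambda>s. \<phi> y s - \<phi> x s - (y - x) * \<Phi>' x s) {0..1} < \<bar>y - x\<bar>"
      using d(2)[OF y(1) False] y(2) False by (simp add: divide_less_eq)
    moreover have "\<bar>y - x\<bar> * Ck_norm 1 (\<Phi>' x) {0..1} \<le> Ck_norm 1 (\<Phi>' x) {0..1}"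
      using yx Ck_norm_nonneg[of 1 "\<Phi>' x" 0 1] ck[OF x] by (simp add: mult_left_le_one_le)
    ultimately show ?thesis
      using Ck_norm_le_first_order[of 1 "\<phi> y" 0 1 "\<phi> x" "\<Phi>' x" "y - x"] ck[OF x] ck[OF y(1)] yx by force
  qed
  moreover have "min d 1 > 0" using d(1) by simp
  ultimately show "\<exists>d>0. \<exists>B. \<forall>y\<in>{0..1}. dist y x < d \<longrightarrow> Ck_norm 1 (\<phi> y) {0..1} \<le> B"
    by blast
qed simp

lemma kernel_uniform_bounds:
  assumes "kernel_C1C1 \<phi>"
  obtains K where "0 \<le> K" "\<And>x s. x \<in> {0..1} \<Longrightarrow> s \<in> {0..1} \<Longrightarrow> \<bar>\<phi> x s\<bar> \<le> K"
    "\<And>x. x \<in> {0..1} \<Longrightarrow> K-lipschitz_on {0..1} (\<phi> x)"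
proof
  let ?K = "SUP x\<in>{0..1}. Ck_norm 1 (\<phi> x) {0..1}"
  have ck: "Ck_on 1 (\<phi> x) {0..1}" if "x \<in> {0..1}" for x
    using assms that unfolding kernel_C1C1_def by blast
  have le: "Ck_norm 1 (\<phi> x) {0..1} \<le> ?K" if "x \<in> {0..1}" for x
    by (rule cSUP_upper[OF that kernel_C1_norm_bdd_above[OF assms]])
  show "0 \<le> ?K" using le[of 0] Ck_norm_nonneg[OF ck[of 0]] by simp
  show "\<bar>\<phi> x s\<bar> \<le> ?K" if "x \<in> {0..1}" "s \<in> {0..1}" for x s
    using abs_value_le_Ck_norm[OF ck] le that by (meson order_trans)
  show "?K-lipschitz_on {0..1} (\<phi> x)" if "x \<in> {0..1}" for x
    using lipschitz_on_mono[OF lipschitz_on_C1_norm[OF ck[OF that] zero_le_one] subset_refl le[OF that]] .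
qed

lemma PC21_norm_nonneg: "PC21 \<psi> \<psi>x \<psi>xx \<Longrightarrow> 0 \<le> PC21_norm \<psi> \<psi>xx"
  unfolding PC21_def PC21_norm_def using Ck_norm_nonneg PCk_norm_nonneg by fastforce

lemma PC21_norm_quasi_triangle:
  assumes u: "PC21 u ux uxx" and w: "PC21 w wx wxx"
  shows "PC21_norm w wxx \<le> 2 * PC21_norm u uxx + 2 * PC21_norm (\<lambda>x. w x - u x) (\<lambda>x. wxx x - uxx x)"
proof -
  have cu: "Ck_on 1 u {0..1}" and cw: "Ck_on 1 w {0..1}" using u w unfolding PC21_def by auto
  have cd: "Ck_on 1 (\<lambda>x. w x - u x) {0..1}" using Ck_on_diff[OF cw cu] .
  have "Ck_norm 1 w {0..1} \<le> Ck_norm 1 u {0..1} + Ck_norm 1 (\<lambda>x. w x - u x) {0..1}"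
    using Ck_norm_add_scaled_le[OF cu cd, of 1] by simp
  moreover have "PCk_norm 1 wxx \<le> 2 * (PCk_norm 1 uxx + PCk_norm 1 (\<lambda>x. wxx x - uxx x))"
    using u w unfolding PC21_def by (intro PCk_norm_quasi_triangle) auto
  moreover have "0 \<le> Ck_norm 1 u {0..1}" "0 \<le> Ck_norm 1 (\<lambda>x. w x - u x) {0..1}"
    using Ck_norm_nonneg[OF cu] Ck_norm_nonneg[OF cd] by auto
  ultimately show ?thesis unfolding PC21_norm_def by (simp add: algebra_simps)
qed

lemma PC21_norm_bdd_above_compact:
  fixes \<xi> \<xi>x \<xi>xx :: "'a::metric_space \<Rightarrow> real \<Rightarrow> real"
  assumes "compact S" "\<forall>t\<in>S. PC21 (\<xi> t) (\<xi>x t) (\<xi>xx t)"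
    and "\<forall>s\<in>S. ((\<lambda>t. PC21_norm (\<lambda>x. \<xi> t x - \<xi> s x) (\<lambda>x. \<xi>xx t x - \<xi>xx s x)) \<longlongrightarrow> 0) (at s within S)"
  shows "bdd_above ((\<lambda>t. PC21_norm (\<xi> t) (\<xi>xx t)) ` S)"
proof (rule compact_locally_bounded_imp_bdd_above[OF assms(1)])
  fix s assume s: "s \<in> S"
  have "\<forall>\<^sub>F t in at s within S. PC21_norm (\<lambda>x. \<xi> t x - \<xi> s x) (\<lambda>x. \<xi>xx t x - \<xi>xx s x) < 1"
    using assms(3) s by (intro order_tendstoD(2)) auto
  then obtain d where d: "d > 0" "\<And>t. t \<in> S \<Longrightarrow> t \<noteq> s \<Longrightarrow> dist t s < d \<Longrightarrow>
      PC21_norm (\<lambda>x. \<xi> t x - \<xi> s x) (\<lambda>x. \<xi>xx t x - \<xi>xx s x) < 1"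
    unfolding eventually_at by blast
  have "PC21_norm (\<xi> t) (\<xi>xx t) \<le> 2 * PC21_norm (\<xi> s) (\<xi>xx s) + 2" if "t \<in> S" "dist t s < d" for t
  proof (cases "t = s")
    case True
    then show ?thesis using PC21_norm_nonneg assms(2) s by fastforce
  next
    case False
    then show ?thesis
      using PC21_norm_quasi_triangle[of "\<xi> s" "\<xi>x s" "\<xi>xx s" "\<xi> t" "\<xi>x t" "\<xi>xx t"] d(2)[OF that(1) False that(2)]
        assms(2) s that(1) by fastforce
  qed
  then show "\<exists>d>0. \<exists>B. \<forall>t\<in>S. dist t s < d \<longrightarrow> PC21_norm (\<xi> t) (\<xi>xx t) \<le> B"
    using d(1) by blast
qed

section \<open>Taylor estimates\<close>

lemma abs_diff_le_derivative_bound: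
  fixes f f' :: "real \<Rightarrow> real"
  assumes "\<And>u. u \<in> {min x y..max x y} \<Longrightarrow> (f has_real_derivative f' u) (at u within {min x y..max x y})"
    and "\<And>u. u \<in> {min x y..max x y} \<Longrightarrow> \<bar>f' u\<bar> \<le> B"
  shows "\<bar>f y - f x\<bar> \<le> B * \<bar>y - x\<bar>"
proof -
  have "norm (f y - f x) \<le> B * norm (y - x)"
    using assms by (intro field_differentiable_bound[of "{min x y..max x y}" f f']) simp_all
  then show ?thesis by simp
qed

lemma has_integral_abs_bound:
  fixes f :: "real \<Rightarrow> real"
  assumes "(f has_integral i) {a..b}" "a \<le> b" "0 \<le> B" "\<And>x. x \<in> {a..b} \<Longrightarrow> \<bar>f x\<bar> \<le> B"
  shows "\<bar>i\<bar> \<le> B * (b - a)"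
  using has_integral_bound[of B f i a b] assms by (simp add: content_real)

lemma taylor1_lipschitz:
  fixes f f' :: "real \<Rightarrow> real"
  assumes "\<And>u. u \<in> {min x y..max x y} \<Longrightarrow> (f has_real_derivative f' u) (at u within {min x y..max x y})"
    and "L-lipschitz_on {min x y..max x y} f'"
  shows "\<bar>f y - f x - (y - x) * f' x\<bar> \<le> L * (y - x)\<^sup>2"
proof -
  have "\<bar>(f y - y * f' x) - (f x - x * f' x)\<bar> \<le> (L * \<bar>y - x\<bar>) * \<bar>y - x\<bar>"
  proof (rule abs_diff_le_derivative_bound)
    fix u assume u: "u \<in> {min x y..max x y}"
    show "((\<lambda>u. f u - u * f' x) has_real_derivative f' u - f' x) (at u within {min x y..max x y})"
      using assms(1)[OF u] by (auto intro!: derivative_eq_intros)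
    have "\<bar>f' u - f' x\<bar> \<le> L * \<bar>u - x\<bar>"
      using lipschitz_onD[OF assms(2) u, of x] by (simp add: dist_real_def)
    also have "\<dots> \<le> L * \<bar>y - x\<bar>"
      using u lipschitz_on_nonneg[OF assms(2)] by (intro mult_left_mono) auto
    finally show "\<bar>f' u - f' x\<bar> \<le> L * \<bar>y - x\<bar>" .
  qed
  then show ?thesis by (simp add: power2_eq_square algebra_simps abs_mult)
qed

lemma taylor2_lipschitz:
  fixes f f' f'' :: "real \<Rightarrow> real" and x y :: real
  defines "S \<equiv> {min x y..max x y}"
  assumes f': "\<And>u. u \<in> S \<Longrightarrow> (f has_real_derivative f' u) (at u within S)"
    and f'': "\<And>u. u \<in> S \<Longrightarrow> (f' has_real_derivative f'' u) (at u within S)"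
    and lip: "L-lipschitz_on S f''"
  shows "\<bar>f y - f x - (y - x) * f' x - (y - x)\<^sup>2 / 2 * f'' x\<bar> \<le> L * \<bar>y - x\<bar> ^ 3"
proof -
  have "\<bar>f' u - f' x - (u - x) * f'' x\<bar> \<le> L * (y - x)\<^sup>2" if u: "u \<in> S" for u
  proof -
    have sub: "{min x u..max x u} \<subseteq> S" using u unfolding S_def by auto
    have "\<bar>f' u - f' x - (u - x) * f'' x\<bar> \<le> L * (u - x)\<^sup>2"
      using f'' sub by (intro taylor1_lipschitz[OF DERIV_subset[OF _ sub]] lipschitz_on_subset[OF lip sub]) auto
    also have "\<dots> \<le> L * (y - x)\<^sup>2"
      using u lipschitz_on_nonneg[OF lip] unfolding S_def
      by (intro mult_left_mono) (auto simp: abs_le_square_iff[symmetric])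
    finally show ?thesis .
  qed
  then have "\<bar>(f y - y * f' x - (y - x)\<^sup>2 / 2 * f'' x) - (f x - x * f' x - (x - x)\<^sup>2 / 2 * f'' x)\<bar>
      \<le> (L * (y - x)\<^sup>2) * \<bar>y - x\<bar>"
    using f' unfolding S_def
    by (intro abs_diff_le_derivative_bound[where f'="\<lambda>u. f' u - f' x - (u - x) * f'' x"])
      (auto intro!: derivative_eq_intros simp: power2_eq_square field_simps)
  then show ?thesis by (simp add: power2_eq_square power3_eq_cube abs_mult algebra_simps)
qed

lemma PC1_witness_abs_diff_le:
  assumes W: "PC1_witness w F B K" and zy: "0 \<le> z" "z \<le> y" "y \<le> 1" and cont: "continuous_on {z..y} w"
  shows "\<bar>w y - w z\<bar> \<le> PCk_norm 1 w * (y - z)"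
proof -
  let ?N = "PCk_norm 1 w"
  define w' where "w' u = (SOME d. (w has_real_derivative d) (at u))" for u
  have w': "(w has_real_derivative w' u) (at u) \<and> \<bar>w' u\<bar> \<le> ?N" if u: "u \<in> {z<..<y} - F" for u
  proof -
    have u01: "u \<in> {0<..<1} - F" using u zy by auto
    obtain d where "(w has_real_derivative d) (at u)" using PC1_witness_has_derivative[OF W u01] .
    then have "(w has_real_derivative w' u) (at u)" unfolding w'_def by (rule someI)
    then show ?thesis using PC1_witness_deriv_le_PCk_norm[OF W u01] by blast
  qed
  have "((\<lambda>u. if u \<in> {z<..<y} - F then w' u else 0) has_integral (w y - w z)) {z..y}"
    using W w' zy(2) cont unfolding PC1_witness_def
    by (intro fundamental_theorem_of_calculus_interior_strong[where S=F])
      (auto simp: has_real_derivative_iff_has_vector_derivative[symmetric])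
  then show ?thesis
    by (rule has_integral_abs_bound) (use w' PC1_witness_abs_le_PCk_norm[OF W, of 0] zy(2) in auto)
qed

lemma PCk_lipschitz_on_differentiable:
  assumes "PCk 1 w" "0 \<le> p" "q \<le> 1"
    and diff: "\<And>u. u \<in> {p..q} \<Longrightarrow> w differentiable (at u within {0..1})"
  shows "(PCk_norm 1 w)-lipschitz_on {p..q} w"
proof (rule lipschitz_onI)
  obtain F B K where W: "PC1_witness w F B K" using PCk_imp_PC1_witness[OF assms(1)] .
  have cont: "continuous_on {z..y} w" if "{z..y} \<subseteq> {p..q}" for y z
    unfolding continuous_on_eq_continuous_within
  proof
    fix u assume "u \<in> {z..y}"
    then have "continuous (at u within {0..1}) w"
      using diff that by (intro differentiable_imp_continuous_within) auto
    then show "continuous (at u within {z..y}) w"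
      by (rule continuous_within_subset) (use that assms(2,3) in auto)
  qed
  show "dist (w y) (w z) \<le> PCk_norm 1 w * dist y z" if "y \<in> {p..q}" "z \<in> {p..q}" for y z
  proof (cases "z \<le> y")
    case True
    then have "\<bar>w y - w z\<bar> \<le> PCk_norm 1 w * (y - z)"
      using that assms(2,3) by (intro PC1_witness_abs_diff_le[OF W] cont) auto
    then show ?thesis using True by (simp add: dist_real_def)
  next
    case False
    then have "\<bar>w z - w y\<bar> \<le> PCk_norm 1 w * (z - y)"
      using that assms(2,3) by (intro PC1_witness_abs_diff_le[OF W] cont) auto
    then show ?thesis using False by (simp add: dist_real_def abs_minus_commute)
  qed
qed (rule PCk_norm_nonneg[OF assms(1)])

lemma PC21_abs_le:
  assumes "PC21 \<psi> \<psi>x \<psi>xx" "x \<in> {0..1}"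
  shows "\<bar>\<psi> x\<bar> \<le> PC21_norm \<psi> \<psi>xx"
  using abs_value_le_Ck_norm[of 1 \<psi> 0 1 x] PCk_norm_nonneg[of \<psi>xx] assms
  unfolding PC21_def PC21_norm_def by force

lemma PC21_deriv_abs_le:
  assumes "PC21 \<psi> \<psi>x \<psi>xx" "x \<in> {0..1}"
  shows "\<bar>\<psi>x x\<bar> \<le> PC21_norm \<psi> \<psi>xx"
  using abs_derivative_le_Ck_norm[of 1 \<psi> 0 1 x "\<psi>x x"] PCk_norm_nonneg[of \<psi>xx] assms
  unfolding PC21_def PC21_norm_def by force

lemma PC21_second_abs_le:
  assumes "PC21 \<psi> \<psi>x \<psi>xx" "x \<in> {0..1}"
  shows "\<bar>\<psi>xx x\<bar> \<le> PC21_norm \<psi> \<psi>xx"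
  using abs_le_PCk_norm[of \<psi>xx x] Ck_norm_nonneg[of 1 \<psi> 0 1] assms
  unfolding PC21_def PC21_norm_def by force

lemma PC21_lipschitz:
  assumes "PC21 \<psi> \<psi>x \<psi>xx"
  shows "(PC21_norm \<psi> \<psi>xx)-lipschitz_on {0..1} \<psi>"
proof (rule lipschitz_on_mono[OF lipschitz_on_C1_norm subset_refl])
  show "Ck_on 1 \<psi> {0..1}" using assms unfolding PC21_def by blast
  show "Ck_norm 1 \<psi> {0..1} \<le> PC21_norm \<psi> \<psi>xx"
    using PCk_norm_nonneg[of \<psi>xx] assms unfolding PC21_def PC21_norm_def by simp
qed simp

lemma PC21_integral_second:
  assumes "PC21 \<psi> \<psi>x \<psi>xx" "z \<in> {0..1}" "y \<in> {0..1}" "z \<le> y"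
  shows "(\<psi>xx has_integral (\<psi>x y - \<psi>x z)) {z..y}"
proof -
  have int: "(\<psi>xx has_integral (\<psi>x x - \<psi>x 0)) {0..x}" if "x \<in> {0..1}" for x
    using assms(1) that unfolding PC21_def by blast
  have iy: "\<psi>xx integrable_on {0..y}" using int[OF assms(3)] by blast
  have "integral {0..z} \<psi>xx + integral {z..y} \<psi>xx = integral {0..y} \<psi>xx"
    using assms(2-4) by (intro Henstock_Kurzweil_Integration.integral_combine[OF _ _ iy]) auto
  then have "integral {z..y} \<psi>xx = \<psi>x y - \<psi>x z"
    using integral_unique[OF int[OF assms(2)]] integral_unique[OF int[OF assms(3)]] by simp
  moreover have "\<psi>xx integrable_on {z..y}"
    by (rule integrable_subinterval_real[OF iy]) (use assms(2-4) in auto)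
  ultimately show ?thesis using integrable_integral by fastforce
qed

lemma PC21_deriv_lipschitz:
  assumes "PC21 \<psi> \<psi>x \<psi>xx"
  shows "(PC21_norm \<psi> \<psi>xx)-lipschitz_on {0..1} \<psi>x"
proof (rule lipschitz_onI)
  have le: "\<bar>\<psi>x y - \<psi>x z\<bar> \<le> PC21_norm \<psi> \<psi>xx * (y - z)" if "z \<in> {0..1}" "y \<in> {0..1}" "z \<le> y" for y z
    using that PC21_second_abs_le[OF assms] PC21_norm_nonneg[OF assms]
    by (intro has_integral_abs_bound[OF PC21_integral_second[OF assms]]) auto
  show "dist (\<psi>x y) (\<psi>x z) \<le> PC21_norm \<psi> \<psi>xx * dist y z" if "y \<in> {0..1}" "z \<in> {0..1}" for y z
    using le[of z y] le[of y z] that by (cases "z \<le> y") (auto simp: dist_real_def abs_minus_commute)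
qed (rule PC21_norm_nonneg[OF assms])

lemma PC21_has_second_derivative:
  assumes "PC21 \<psi> \<psi>x \<psi>xx" "y \<in> {0..1}" "continuous (at y within {0..1}) \<psi>xx"
  shows "(\<psi>x has_real_derivative \<psi>xx y) (at y within {0..1})"
proof -
  have int: "(\<psi>xx has_integral (\<psi>x x - \<psi>x 0)) {0..x}" if "x \<in> {0..1}" for x
    using assms(1) that unfolding PC21_def by blast
  have "((\<lambda>u. integral {0..u} \<psi>xx) has_real_derivative \<psi>xx y) (at y within {0..1})"
    using integral_has_vector_derivative_continuous_at[of \<psi>xx 0 1 y "{}"] int[of 1] assms(2,3)
    by (auto simp: has_real_derivative_iff_has_vector_derivative)
  then have "((\<lambda>u. integral {0..u} \<psi>xx + \<psi>x 0) has_real_derivative \<psi>xx y + 0) (at y within {0..1})"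
    by (rule DERIV_add[OF _ DERIV_const])
  moreover have "integral {0..u} \<psi>xx + \<psi>x 0 = \<psi>x u" if "u \<in> {0..1}" for u
    using integral_unique[OF int[OF that]] by simp
  ultimately show ?thesis
    using has_field_derivative_transform_within[OF _ zero_less_one assms(2)] by simp
qed

lemma PC21_taylor1:
  assumes "PC21 \<psi> \<psi>x \<psi>xx" "x \<in> {0..1}" "x + s \<in> {0..1}"
  shows "\<bar>\<psi> (x + s) - \<psi> x - s * \<psi>x x\<bar> \<le> PC21_norm \<psi> \<psi>xx * s\<^sup>2"
proof -
  let ?S = "{min x (x + s)..max x (x + s)}"
  have sub: "?S \<subseteq> {0..1}" using assms(2,3) by auto
  have "(\<psi> has_real_derivative \<psi>x u) (at u within ?S)" if "u \<in> ?S" for u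
    using assms(1) that sub unfolding PC21_def by (blast intro: DERIV_subset)
  from taylor1_lipschitz[OF this lipschitz_on_subset[OF PC21_deriv_lipschitz[OF assms(1)] sub]]
  show ?thesis by simp
qed

lemma PC21_second_difference:
  assumes "PC21 \<psi> \<psi>x \<psi>xx" "0 \<le> x - h" "x + h \<le> 1" "0 \<le> h"
  shows "\<bar>\<psi> (x - h) - 2 * \<psi> x + \<psi> (x + h)\<bar> \<le> 2 * PC21_norm \<psi> \<psi>xx * h\<^sup>2"
  using PC21_taylor1[OF assms(1), of x h] PC21_taylor1[OF assms(1), of x "-h"] assms(2-4)
  by (simp add: abs_le_iff)

lemma PC21_backward_difference:
  assumes "PC21 \<psi> \<psi>x \<psi>xx" "0 \<le> x - h" "x \<le> 1" "0 < h"
  shows "\<bar>\<psi>x x - (\<psi> x - \<psi> (x - h)) / h\<bar> \<le> PC21_norm \<psi> \<psi>xx * h"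
proof -
  have "\<bar>\<psi> (x + - h) - \<psi> x - (- h) * \<psi>x x\<bar> \<le> PC21_norm \<psi> \<psi>xx * h\<^sup>2"
    using PC21_taylor1[OF assms(1), of x "-h"] assms(2-4) by simp
  moreover have "\<psi>x x - (\<psi> x - \<psi> (x - h)) / h = (\<psi> (x + - h) - \<psi> x - (- h) * \<psi>x x) / h"
    using assms(4) by (simp add: field_simps)
  ultimately show ?thesis
    using assms(4) by (simp add: abs_divide pos_divide_le_eq power2_eq_square mult.assoc)
qed

lemma PC21_second_difference_smooth:
  assumes pc: "PC21 \<psi> \<psi>x \<psi>xx" and h: "0 < h" "0 \<le> x - h" "x + h \<le> 1"
    and diff: "\<And>u. u \<in> {x-h..x+h} \<Longrightarrow> \<psi>xx differentiable (at u within {0..1})"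
  shows "\<bar>\<psi> (x - h) - 2 * \<psi> x + \<psi> (x + h) - h\<^sup>2 * \<psi>xx x\<bar> \<le> 2 * PC21_norm \<psi> \<psi>xx * h ^ 3"
proof -
  let ?M = "PC21_norm \<psi> \<psi>xx"
  have "PCk 1 \<psi>xx" "Ck_on 1 \<psi> {0..1}" using pc unfolding PC21_def by auto
  then have lip: "?M-lipschitz_on {x-h..x+h} \<psi>xx"
    using Ck_norm_nonneg[of 1 \<psi> 0 1] h diff
    by (intro lipschitz_on_mono[OF PCk_lipschitz_on_differentiable subset_refl])
      (auto simp: PC21_norm_def)
  have d1: "(\<psi> has_real_derivative \<psi>x u) (at u within {0..1})" if "u \<in> {x-h..x+h}" for u
    using pc that h unfolding PC21_def by auto
  have d2: "(\<psi>x has_real_derivative \<psi>xx u) (at u within {0..1})" if u: "u \<in> {x-h..x+h}" for u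
  proof (rule PC21_has_second_derivative[OF pc])
    show "u \<in> {0..1}" using u h by auto
    show "continuous (at u within {0..1}) \<psi>xx" using diff[OF u] by (rule differentiable_imp_continuous_within)
  qed
  have "\<bar>\<psi> (x + s) - \<psi> x - s * \<psi>x x - s\<^sup>2 / 2 * \<psi>xx x\<bar> \<le> ?M * h ^ 3" if s: "s = h \<or> s = -h" for s
  proof -
    have sub: "{min x (x + s)..max x (x + s)} \<subseteq> {x-h..x+h}" using s h by auto
    have sub01: "{min x (x + s)..max x (x + s)} \<subseteq> {0..1}" using sub h by auto
    have "\<bar>\<psi> (x + s) - \<psi> x - (x + s - x) * \<psi>x x - (x + s - x)\<^sup>2 / 2 * \<psi>xx x\<bar> \<le> ?M * \<bar>x + s - x\<bar> ^ 3"
    proof (rule taylor2_lipschitz)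
      fix u assume u: "u \<in> {min x (x + s)..max x (x + s)}"
      show "(\<psi> has_real_derivative \<psi>x u) (at u within {min x (x + s)..max x (x + s)})"
        by (rule DERIV_subset[OF d1 sub01]) (use u sub in auto)
      show "(\<psi>x has_real_derivative \<psi>xx u) (at u within {min x (x + s)..max x (x + s)})"
        by (rule DERIV_subset[OF d2 sub01]) (use u sub in auto)
    next
      show "?M-lipschitz_on {min x (x + s)..max x (x + s)} \<psi>xx" using lipschitz_on_subset[OF lip sub] .
    qed
    then show ?thesis using s h by auto
  qed
  from this[of h] this[of "-h"] show ?thesis by (simp add: abs_le_iff power2_eq_square)
qed

section \<open>Rows of the discrete operators\<close>

lemma hstep_pos: "0 < hstep n"
  by (simp add: hstep_def)

lemma grid_point_le:
  assumes "i \<le> n"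
  shows "real i * hstep n \<le> 1 - hstep n"
proof -
  have "real i * hstep n \<le> real n * hstep n" using assms by (intro mult_right_mono) (auto simp: hstep_def)
  also have "real n * hstep n = 1 - hstep n" by (simp add: hstep_def field_simps)
  finally show ?thesis .
qed

lemma sum_tridiagonal:
  fixes v :: "nat \<Rightarrow> real"
  assumes "1 \<le> i" "i \<le> n"
  shows "(\<Sum>j=1..n. (if i = j then a else if j = i + 1 then b else if i = j + 1 then c else 0) * v j)
        = a * v i + (if i < n then b * v (i + 1) else 0) + (if 1 < i then c * v (i - 1) else 0)"
proof -
  have "(\<Sum>j=1..n. (if i = j then a else if j = i + 1 then b else if i = j + 1 then c else 0) * v j)
      = (\<Sum>j=1..n. (if j = i then a * v i else 0) + (if j = i + 1 then b * v (i + 1) else 0)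
                  + (if j = i - 1 then (if 1 < i then c * v (i - 1) else 0) else 0))"
    by (rule sum.cong) (use assms in auto)
  also have "\<dots> = a * v i + (if i < n then b * v (i + 1) else 0) + (if 1 < i then c * v (i - 1) else 0)"
    using assms by (simp add: sum.distrib) auto
  finally show ?thesis .
qed

lemma matvec_Lmat:
  "matvec n (Lmat \<alpha>0 \<beta>0 \<alpha>1 \<beta>1 n) v i = (\<Sum>j=1..n. Mmat \<alpha>0 \<beta>0 \<alpha>1 \<beta>1 n i j * v j) / (hstep n)\<^sup>2"
  by (simp add: matvec_def Lmat_def sum_divide_distrib)

lemma matvec_Lmat_interior:
  assumes "2 \<le> i" "i + 1 \<le> n"
  shows "matvec n (Lmat \<alpha>0 \<beta>0 \<alpha>1 \<beta>1 n) v i = (v (i - 1) - 2 * v i + v (i + 1)) / (hstep n)\<^sup>2"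
proof -
  have "(\<Sum>j=1..n. Mmat \<alpha>0 \<beta>0 \<alpha>1 \<beta>1 n i j * v j)
      = (\<Sum>j=1..n. (if i = j then -2 else if j = i + 1 then 1 else if i = j + 1 then 1 else 0) * v j)"
    using assms by (intro sum.cong) (auto simp: Mmat_def)
  also have "\<dots> = v (i - 1) - 2 * v i + v (i + 1)"
    using sum_tridiagonal[of i n "-2" 1 1 v] assms by simp
  finally show ?thesis by (simp add: matvec_Lmat)
qed

lemma matvec_Lmat_first:
  assumes "2 \<le> n"
  shows "matvec n (Lmat \<alpha>0 \<beta>0 \<alpha>1 \<beta>1 n) v 1
    = ((4 * r0 \<alpha>0 \<beta>0 n - 2) * v 1 + (1 - r0 \<alpha>0 \<beta>0 n) * v 2) / (hstep n)\<^sup>2"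
proof -
  have "(\<Sum>j=1..n. Mmat \<alpha>0 \<beta>0 \<alpha>1 \<beta>1 n 1 j * v j)
      = (\<Sum>j=1..n. (if 1 = j then 4 * r0 \<alpha>0 \<beta>0 n - 2 else if j = 1 + 1 then 1 - r0 \<alpha>0 \<beta>0 n
                    else if 1 = j + 1 then 1 else 0) * v j)"
    using assms by (intro sum.cong) (auto simp: Mmat_def)
  also have "\<dots> = (4 * r0 \<alpha>0 \<beta>0 n - 2) * v 1 + (1 - r0 \<alpha>0 \<beta>0 n) * v 2"
    using sum_tridiagonal[of 1 n "4 * r0 \<alpha>0 \<beta>0 n - 2" "1 - r0 \<alpha>0 \<beta>0 n" 1 v] assms
    by (simp add: numeral_2_eq_2)
  finally show ?thesis by (simp add: matvec_Lmat)
qed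

lemma matvec_Lmat_last:
  assumes "3 \<le> n"
  shows "matvec n (Lmat \<alpha>0 \<beta>0 \<alpha>1 \<beta>1 n) v n
    = ((4 * r1 \<alpha>1 \<beta>1 n - 2) * v n + (1 - r1 \<alpha>1 \<beta>1 n) * v (n - 1)) / (hstep n)\<^sup>2"
proof -
  have "(\<Sum>j=1..n. Mmat \<alpha>0 \<beta>0 \<alpha>1 \<beta>1 n n j * v j)
      = (\<Sum>j=1..n. (if n = j then 4 * r1 \<alpha>1 \<beta>1 n - 2 else if j = n + 1 then 1
                    else if n = j + 1 then 1 - r1 \<alpha>1 \<beta>1 n else 0) * v j)"
    using assms by (intro sum.cong) (auto simp: Mmat_def)
  also have "\<dots> = (4 * r1 \<alpha>1 \<beta>1 n - 2) * v n + (1 - r1 \<alpha>1 \<beta>1 n) * v (n - 1)"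
    using sum_tridiagonal[of n n "4 * r1 \<alpha>1 \<beta>1 n - 2" 1 "1 - r1 \<alpha>1 \<beta>1 n" v] assms by simp
  finally show ?thesis by (simp add: matvec_Lmat)
qed

lemma matvec_Dmat_first:
  assumes "1 \<le> n"
  shows "matvec n (Dmat \<alpha>0 \<beta>0 n) v 1 = q0 \<alpha>0 \<beta>0 n * v 1"
proof -
  have "matvec n (Dmat \<alpha>0 \<beta>0 n) v 1 = (\<Sum>j=1..n. if j = 1 then q0 \<alpha>0 \<beta>0 n * v 1 else 0)"
    unfolding matvec_def using hstep_pos[of n]
    by (intro sum.cong) (auto simp: Dmat_def Nmat_def)
  then show ?thesis using assms by simp
qed

lemma matvec_Dmat:
  assumes "2 \<le> i" "i \<le> n"
  shows "matvec n (Dmat \<alpha>0 \<beta>0 n) v i = (v i - v (i - 1)) / hstep n"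
proof -
  have "matvec n (Dmat \<alpha>0 \<beta>0 n) v i
     = (\<Sum>j=1..n. (if i = j then 1 else if j = i + 1 then 0 else if i = j + 1 then -1 else 0) * v j) / hstep n"
    unfolding matvec_def sum_divide_distrib by (rule sum.cong) (use assms in \<open>auto simp: Dmat_def Nmat_def\<close>)
  then show ?thesis using sum_tridiagonal[of i n 1 0 "-1" v] assms by simp
qed

lemma matvec_Phimat:
  assumes "i \<le> n"
  shows "matvec n (Phimat \<phi> n) v i = hstep n * (\<Sum>m=1..i. \<phi> (real i * hstep n) (real m * hstep n) * v m)"
proof -
  have "matvec n (Phimat \<phi> n) v i
      = (\<Sum>j\<in>{1..n}. if j \<le> i then hstep n * \<phi> (real i * hstep n) (real j * hstep n) * v j else 0)"
    unfolding matvec_def by (rule sum.cong) (auto simp: Phimat_def)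
  also have "\<dots> = (\<Sum>j\<in>{j\<in>{1..n}. j \<le> i}. hstep n * \<phi> (real i * hstep n) (real j * hstep n) * v j)"
    by (rule sum.inter_filter[symmetric]) simp
  also have "{j\<in>{1..n}. j \<le> i} = {1..i}" using assms by auto
  finally show ?thesis by (simp add: sum_distrib_left mult.assoc)
qed

lemma matvec_Pmat:
  assumes "i \<in> {1..n}"
  shows "matvec n (Pmat \<theta> \<sigma> lam \<phi> \<alpha>0 \<beta>0 \<alpha>1 \<beta>1 n) v i
    = \<theta> (real i * hstep n) * matvec n (Lmat \<alpha>0 \<beta>0 \<alpha>1 \<beta>1 n) v i
    + \<sigma> (real i * hstep n) * matvec n (Dmat \<alpha>0 \<beta>0 n) v i
    + lam (real i * hstep n) * v i
    + matvec n (Phimat \<phi> n) v i"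
proof -
  let ?x = "real i * hstep n"
  have "matvec n (Pmat \<theta> \<sigma> lam \<phi> \<alpha>0 \<beta>0 \<alpha>1 \<beta>1 n) v i
      = (\<Sum>j=1..n. \<theta> ?x * (Lmat \<alpha>0 \<beta>0 \<alpha>1 \<beta>1 n i j * v j) + \<sigma> ?x * (Dmat \<alpha>0 \<beta>0 n i j * v j)
          + (if j = i then lam ?x * v i else 0) + Phimat \<phi> n i j * v j)"
    unfolding matvec_def Pmat_def by (intro sum.cong) (auto simp: distrib_right mult.assoc)
  also have "\<dots> = \<theta> ?x * matvec n (Lmat \<alpha>0 \<beta>0 \<alpha>1 \<beta>1 n) v i + \<sigma> ?x * matvec n (Dmat \<alpha>0 \<beta>0 n) v i
      + lam ?x * v i + matvec n (Phimat \<phi> n) v i"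
    using assms by (simp add: matvec_def sum.distrib sum_distrib_left)
  finally show ?thesis .
qed

lemma grid_points_near:
  assumes "h > 0"
  shows "finite {i::nat. \<bar>real i * h - c\<bar> \<le> h}" "card {i::nat. \<bar>real i * h - c\<bar> \<le> h} \<le> 3"
proof -
  define K where "K = \<lceil>c / h - 1\<rceil>"
  have sub: "{i::nat. \<bar>real i * h - c\<bar> \<le> h} \<subseteq> nat ` {K..K+2}"
  proof
    fix i :: nat assume "i \<in> {i::nat. \<bar>real i * h - c\<bar> \<le> h}"
    then have "c / h - 1 \<le> real i" "real i \<le> c / h + 1"
      using assms by (auto simp: abs_le_iff field_simps)
    moreover have "c / h - 1 \<le> real_of_int K" "real_of_int K < c / h" unfolding K_def by linarith+
    ultimately have "int i \<in> {K..K+2}" by auto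
    then show "i \<in> nat ` {K..K+2}" by (metis image_eqI nat_int)
  qed
  then show "finite {i::nat. \<bar>real i * h - c\<bar> \<le> h}" by (rule finite_subset) simp
  have "card {i::nat. \<bar>real i * h - c\<bar> \<le> h} \<le> card (nat ` {K..K+2})"
    using sub by (intro card_mono) auto
  also have "\<dots> \<le> card {K..K+2}" by (rule card_image_le) simp
  finally show "card {i::nat. \<bar>real i * h - c\<bar> \<le> h} \<le> 3" by simp
qed

section \<open>Row-wise truncation errors\<close>

text \<open>The last row of \<open>diffusion_residual\<close> also absorbs \<open>B\<^sub>n f\<close>, divided by \<open>\<theta>(n h)\<close>.\<close>
definition diffusion_residual ::
    "real \<Rightarrow> real \<Rightarrow> real \<Rightarrow> real \<Rightarrow> nat \<Rightarrow> (real \<Rightarrow> real) \<Rightarrow> (real \<Rightarrow> real) \<Rightarrow> (real \<Rightarrow> real) \<Rightarrow> nat \<Rightarrow> real"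
  where "diffusion_residual \<alpha>0 \<beta>0 \<alpha>1 \<beta>1 n \<psi> \<psi>x \<psi>xx i =
    \<psi>xx (real i * hstep n) - matvec n (Lmat \<alpha>0 \<beta>0 \<alpha>1 \<beta>1 n) (Rn n \<psi>) i
    - (if i = n then 2 * hstep n * (\<alpha>1 * \<psi>x 1 + \<beta>1 * \<psi> 1) / (3 * \<alpha>1 + 2 * hstep n * \<beta>1) / (hstep n)\<^sup>2
       else 0)"

definition convection_residual ::
    "real \<Rightarrow> real \<Rightarrow> nat \<Rightarrow> (real \<Rightarrow> real) \<Rightarrow> (real \<Rightarrow> real) \<Rightarrow> nat \<Rightarrow> real"
  where "convection_residual \<alpha>0 \<beta>0 n \<psi> \<psi>x i =
    \<psi>x (real i * hstep n) - matvec n (Dmat \<alpha>0 \<beta>0 n) (Rn n \<psi>) i"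

definition quadrature_residual :: "(real \<Rightarrow> real \<Rightarrow> real) \<Rightarrow> nat \<Rightarrow> (real \<Rightarrow> real) \<Rightarrow> nat \<Rightarrow> real"
  where "quadrature_residual \<phi> n \<psi> i =
    integral {0..real i * hstep n} (\<lambda>s. \<phi> (real i * hstep n) s * \<psi> s) - matvec n (Phimat \<phi> n) (Rn n \<psi>) i"

definition truncation_error ::
    "(real \<Rightarrow> real) \<Rightarrow> (real \<Rightarrow> real) \<Rightarrow> (real \<Rightarrow> real) \<Rightarrow> (real \<Rightarrow> real \<Rightarrow> real) \<Rightarrow>
     real \<Rightarrow> real \<Rightarrow> real \<Rightarrow> real \<Rightarrow> nat \<Rightarrow> (real \<Rightarrow> real) \<Rightarrow> (real \<Rightarrow> real) \<Rightarrow> (real \<Rightarrow> real) \<Rightarrow> nat \<Rightarrow> real"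
  where "truncation_error \<theta> \<sigma> lam \<phi> \<alpha>0 \<beta>0 \<alpha>1 \<beta>1 n \<psi> \<psi>x \<psi>xx = (\<lambda>i.
    Rn n (Pop \<theta> \<sigma> lam \<phi> \<psi> \<psi>x \<psi>xx) i - matvec n (Pmat \<theta> \<sigma> lam \<phi> \<alpha>0 \<beta>0 \<alpha>1 \<beta>1 n) (Rn n \<psi>) i
    - Bvec \<theta> \<alpha>1 \<beta>1 n i * (\<alpha>1 * \<psi>x 1 + \<beta>1 * \<psi> 1))"

text \<open>The reaction terms \<open>\<Lambda>\<^sub>n\<close> are exact on the grid and cancel.\<close>
lemma truncation_error_split:
  assumes "i \<in> {1..n}"
  shows "truncation_error \<theta> \<sigma> lam \<phi> \<alpha>0 \<beta>0 \<alpha>1 \<beta>1 n \<psi> \<psi>x \<psi>xx i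
    = \<theta> (real i * hstep n) * diffusion_residual \<alpha>0 \<beta>0 \<alpha>1 \<beta>1 n \<psi> \<psi>x \<psi>xx i
    + \<sigma> (real i * hstep n) * convection_residual \<alpha>0 \<beta>0 n \<psi> \<psi>x i
    + quadrature_residual \<phi> n \<psi> i"
proof -
  have "Bvec \<theta> \<alpha>1 \<beta>1 n i * (\<alpha>1 * \<psi>x 1 + \<beta>1 * \<psi> 1) = \<theta> (real i * hstep n) *
      (if i = n then 2 * hstep n * (\<alpha>1 * \<psi>x 1 + \<beta>1 * \<psi> 1) / (3 * \<alpha>1 + 2 * hstep n * \<beta>1) / (hstep n)\<^sup>2 else 0)"
    by (simp add: Bvec_def bn_def mult_ac)
  then show ?thesis
    using assms
    by (simp add: truncation_error_def diffusion_residual_def convection_residual_def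
        quadrature_residual_def matvec_Pmat Pop_def Rn_def algebra_simps)
qed

lemma PC21_one_sided_stencil:
  assumes "PC21 \<psi> \<psi>x \<psi>xx" "p \<in> {0..1}" "p + s \<in> {0..1}" "p + 2 * s \<in> {0..1}"
  shows "\<bar>4 * \<psi> (p + s) - \<psi> (p + 2 * s) - 3 * \<psi> p - 2 * s * \<psi>x p\<bar> \<le> 8 * PC21_norm \<psi> \<psi>xx * s\<^sup>2"
  using PC21_taylor1[OF assms(1,2,3)] PC21_taylor1[OF assms(1,2,4)]
  by (simp add: abs_le_iff power2_eq_square algebra_simps)

lemma abs_mult_le_if_abs_le_1:
  fixes c y B :: real
  assumes "\<bar>c\<bar> \<le> 1" "\<bar>y\<bar> \<le> B"
  shows "\<bar>c * y\<bar> \<le> B"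
  using mult_right_mono[OF assms(1) abs_ge_zero[of y]] assms(2) by (simp add: abs_mult)

lemma boundary_coefficient_le_1:
  fixes \<alpha> \<beta> h :: real
  assumes "0 \<le> h" "\<alpha> = 0 \<or> 2 * h * \<bar>\<beta>\<bar> \<le> \<bar>\<alpha>\<bar>"
  shows "\<bar>\<alpha> / (3 * \<alpha> + 2 * h * \<beta>)\<bar> \<le> 1"
proof (cases "\<alpha> = 0")
  case False
  then have "\<bar>\<alpha>\<bar> \<le> \<bar>3 * \<alpha> + 2 * h * \<beta>\<bar>"
    using assms abs_triangle_ineq2[of "3 * \<alpha>" "- (2 * h * \<beta>)"] by (auto simp: abs_mult)
  then show ?thesis using False by (simp add: abs_divide divide_le_eq_1)
qed simp

text \<open>The first and last rows of \<open>L\<^sub>n\<close> arise from eliminating the boundary values \<open>\<psi>(0)\<close>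
  and \<open>\<psi>(1)\<close> with the Robin conditions; this elimination is accurate to second order.\<close>

lemma PC21_left_boundary_extrapolation:
  fixes h :: real
  assumes pc: "PC21 \<psi> \<psi>x \<psi>xx" and bc: "\<alpha>0 * \<psi>x 0 + \<beta>0 * \<psi> 0 = 0" and h: "0 < h" "2 * h \<le> 1"
    and nz: "3 * \<alpha>0 - 2 * h * \<beta>0 \<noteq> 0" and small: "\<alpha>0 = 0 \<or> 2 * h * \<bar>\<beta>0\<bar> \<le> \<bar>\<alpha>0\<bar>"
  shows "\<bar>\<alpha>0 / (3 * \<alpha>0 - 2 * h * \<beta>0) * (4 * \<psi> h - \<psi> (2 * h)) - \<psi> 0\<bar> \<le> 8 * PC21_norm \<psi> \<psi>xx * h\<^sup>2"
proof -
  define D where "D = 3 * \<alpha>0 - 2 * h * \<beta>0"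
  define A where "A = 4 * \<psi> h - \<psi> (2 * h)"
  have "D \<noteq> 0" using nz by (simp add: D_def)
  then have "\<alpha>0 / D * A - \<psi> 0 = (\<alpha>0 * A - D * \<psi> 0) / D" by (simp add: field_simps)
  also have "D * \<psi> 0 = 3 * \<alpha>0 * \<psi> 0 - 2 * h * (\<beta>0 * \<psi> 0)" by (simp add: D_def algebra_simps)
  also have "\<beta>0 * \<psi> 0 = - (\<alpha>0 * \<psi>x 0)" using bc by linarith
  also have "\<alpha>0 * A - (3 * \<alpha>0 * \<psi> 0 - 2 * h * - (\<alpha>0 * \<psi>x 0)) = \<alpha>0 * (A - 3 * \<psi> 0 - 2 * h * \<psi>x 0)"
    by (simp add: algebra_simps)
  finally have "\<alpha>0 / D * A - \<psi> 0 = \<alpha>0 / D * (4 * \<psi> (0 + h) - \<psi> (0 + 2 * h) - 3 * \<psi> 0 - 2 * h * \<psi>x 0)"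
    by (simp add: A_def)
  also have "\<bar>\<dots>\<bar> \<le> 8 * PC21_norm \<psi> \<psi>xx * h\<^sup>2"
  proof (rule abs_mult_le_if_abs_le_1)
    show "\<bar>\<alpha>0 / D\<bar> \<le> 1" using boundary_coefficient_le_1[of h \<alpha>0 "-\<beta>0"] small h by (simp add: D_def)
    show "\<bar>4 * \<psi> (0 + h) - \<psi> (0 + 2 * h) - 3 * \<psi> 0 - 2 * h * \<psi>x 0\<bar> \<le> 8 * PC21_norm \<psi> \<psi>xx * h\<^sup>2"
      using h by (intro PC21_one_sided_stencil[OF pc]) auto
  qed
  finally show ?thesis by (simp add: A_def D_def)
qed

lemma PC21_right_boundary_extrapolation:
  fixes h :: real
  assumes pc: "PC21 \<psi> \<psi>x \<psi>xx" and h: "0 < h" "2 * h \<le> 1"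
    and nz: "3 * \<alpha>1 + 2 * h * \<beta>1 \<noteq> 0" and small: "\<alpha>1 = 0 \<or> 2 * h * \<bar>\<beta>1\<bar> \<le> \<bar>\<alpha>1\<bar>"
  shows "\<bar>\<alpha>1 / (3 * \<alpha>1 + 2 * h * \<beta>1) * (4 * \<psi> (1 - h) - \<psi> (1 - 2 * h))
          + 2 * h * (\<alpha>1 * \<psi>x 1 + \<beta>1 * \<psi> 1) / (3 * \<alpha>1 + 2 * h * \<beta>1) - \<psi> 1\<bar>
    \<le> 8 * PC21_norm \<psi> \<psi>xx * h\<^sup>2"
proof -
  define D where "D = 3 * \<alpha>1 + 2 * h * \<beta>1"
  define A where "A = 4 * \<psi> (1 - h) - \<psi> (1 - 2 * h)"
  have "D \<noteq> 0" using nz by (simp add: D_def)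
  then have "\<alpha>1 / D * A + 2 * h * (\<alpha>1 * \<psi>x 1 + \<beta>1 * \<psi> 1) / D - \<psi> 1
      = (\<alpha>1 * A + 2 * h * (\<alpha>1 * \<psi>x 1 + \<beta>1 * \<psi> 1) - D * \<psi> 1) / D"
    by (simp add: field_simps)
  also have "\<alpha>1 * A + 2 * h * (\<alpha>1 * \<psi>x 1 + \<beta>1 * \<psi> 1) - D * \<psi> 1 = \<alpha>1 * (A - 3 * \<psi> 1 + 2 * h * \<psi>x 1)"
    by (simp add: D_def algebra_simps)
  finally have "\<alpha>1 / D * A + 2 * h * (\<alpha>1 * \<psi>x 1 + \<beta>1 * \<psi> 1) / D - \<psi> 1
      = \<alpha>1 / D * (4 * \<psi> (1 - h) - \<psi> (1 - 2 * h) - 3 * \<psi> 1 + 2 * h * \<psi>x 1)"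
    by (simp add: A_def)
  also have "\<bar>\<dots>\<bar> \<le> 8 * PC21_norm \<psi> \<psi>xx * h\<^sup>2"
  proof (rule abs_mult_le_if_abs_le_1)
    show "\<bar>\<alpha>1 / D\<bar> \<le> 1" unfolding D_def using h by (intro boundary_coefficient_le_1[OF _ small]) auto
    show "\<bar>4 * \<psi> (1 - h) - \<psi> (1 - 2 * h) - 3 * \<psi> 1 + 2 * h * \<psi>x 1\<bar> \<le> 8 * PC21_norm \<psi> \<psi>xx * h\<^sup>2"
      using h PC21_one_sided_stencil[OF pc, of 1 "- h"] by simp
  qed
  finally show ?thesis by (simp add: A_def D_def)
qed

lemma diffusion_residual_first_row:
  assumes pc: "PC21 \<psi> \<psi>x \<psi>xx" and bc: "\<alpha>0 * \<psi>x 0 + \<beta>0 * \<psi> 0 = 0" and n: "3 \<le> n"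
    and nz: "3 * \<alpha>0 - 2 * hstep n * \<beta>0 \<noteq> 0" and small: "\<alpha>0 = 0 \<or> 2 * hstep n * \<bar>\<beta>0\<bar> \<le> \<bar>\<alpha>0\<bar>"
  shows "\<bar>diffusion_residual \<alpha>0 \<beta>0 \<alpha>1 \<beta>1 n \<psi> \<psi>x \<psi>xx 1\<bar> \<le> 11 * PC21_norm \<psi> \<psi>xx"
proof -
  let ?M = "PC21_norm \<psi> \<psi>xx" and ?h = "hstep n"
  define r where "r = r0 \<alpha>0 \<beta>0 n"
  have h: "0 < ?h" "2 * ?h \<le> 1" using n by (auto simp: hstep_def field_simps)
  have "\<bar>r * (4 * \<psi> ?h - \<psi> (2 * ?h)) - \<psi> 0\<bar> \<le> 8 * ?M * ?h\<^sup>2"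
    using PC21_left_boundary_extrapolation[OF pc bc h nz small] by (simp add: r_def r0_def)
  moreover have "\<bar>\<psi> 0 - 2 * \<psi> ?h + \<psi> (2 * ?h)\<bar> \<le> 2 * ?M * ?h\<^sup>2"
    using PC21_second_difference[OF pc, of ?h ?h] h by (simp add: mult_2[symmetric])
  moreover have "(4 * r - 2) * \<psi> ?h + (1 - r) * \<psi> (2 * ?h)
      = (\<psi> 0 - 2 * \<psi> ?h + \<psi> (2 * ?h)) + (r * (4 * \<psi> ?h - \<psi> (2 * ?h)) - \<psi> 0)"
    by (simp add: algebra_simps)
  ultimately have "\<bar>(4 * r - 2) * \<psi> ?h + (1 - r) * \<psi> (2 * ?h)\<bar> \<le> 10 * ?M * ?h\<^sup>2"
    using abs_triangle_ineq[of "\<psi> 0 - 2 * \<psi> ?h + \<psi> (2 * ?h)"] by linarith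
  then have stencil: "\<bar>((4 * r - 2) * \<psi> ?h + (1 - r) * \<psi> (2 * ?h)) / ?h\<^sup>2\<bar> \<le> 10 * ?M"
    using h by (simp add: abs_divide pos_divide_le_eq)
  have xx: "\<bar>\<psi>xx ?h\<bar> \<le> ?M" using PC21_second_abs_le[OF pc] h by simp
  have res: "diffusion_residual \<alpha>0 \<beta>0 \<alpha>1 \<beta>1 n \<psi> \<psi>x \<psi>xx 1
      = \<psi>xx ?h - ((4 * r - 2) * \<psi> ?h + (1 - r) * \<psi> (2 * ?h)) / ?h\<^sup>2"
    using n matvec_Lmat_first[of n] by (simp add: diffusion_residual_def Rn_def r_def)
  have "\<bar>\<psi>xx ?h - ((4 * r - 2) * \<psi> ?h + (1 - r) * \<psi> (2 * ?h)) / ?h\<^sup>2\<bar> \<le> ?M + 10 * ?M"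
    by (rule order_trans[OF abs_triangle_ineq4 add_mono[OF xx stencil]])
  then show ?thesis unfolding res by simp
qed

lemma diffusion_residual_last_row:
  assumes pc: "PC21 \<psi> \<psi>x \<psi>xx" and n: "3 \<le> n"
    and nz: "3 * \<alpha>1 + 2 * hstep n * \<beta>1 \<noteq> 0" and small: "\<alpha>1 = 0 \<or> 2 * hstep n * \<bar>\<beta>1\<bar> \<le> \<bar>\<alpha>1\<bar>"
  shows "\<bar>diffusion_residual \<alpha>0 \<beta>0 \<alpha>1 \<beta>1 n \<psi> \<psi>x \<psi>xx n\<bar> \<le> 11 * PC21_norm \<psi> \<psi>xx"
proof -
  let ?M = "PC21_norm \<psi> \<psi>xx" and ?h = "hstep n"
  define r where "r = r1 \<alpha>1 \<beta>1 n"
  define D where "D = 3 * \<alpha>1 + 2 * ?h * \<beta>1"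
  define f where "f = \<alpha>1 * \<psi>x 1 + \<beta>1 * \<psi> 1"
  have h: "0 < ?h" "2 * ?h \<le> 1" using n by (auto simp: hstep_def field_simps)
  have grid: "real n * ?h = 1 - ?h" "real (n - 1) * ?h = 1 - 2 * ?h"
    using n by (auto simp: hstep_def field_simps of_nat_diff)
  have "\<bar>r * (4 * \<psi> (1 - ?h) - \<psi> (1 - 2 * ?h)) + 2 * ?h * f / D - \<psi> 1\<bar> \<le> 8 * ?M * ?h\<^sup>2"
    using PC21_right_boundary_extrapolation[OF pc h nz small] by (simp add: r_def r1_def D_def f_def)
  moreover have "\<bar>\<psi> (1 - 2 * ?h) - 2 * \<psi> (1 - ?h) + \<psi> 1\<bar> \<le> 2 * ?M * ?h\<^sup>2"
    using PC21_second_difference[OF pc, of "1 - ?h" ?h] h by (simp add: mult_2[symmetric] diff_diff_eq)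
  moreover have "(4 * r - 2) * \<psi> (1 - ?h) + (1 - r) * \<psi> (1 - 2 * ?h) + 2 * ?h * f / D
      = (\<psi> (1 - 2 * ?h) - 2 * \<psi> (1 - ?h) + \<psi> 1)
        + (r * (4 * \<psi> (1 - ?h) - \<psi> (1 - 2 * ?h)) + 2 * ?h * f / D - \<psi> 1)"
    by (simp add: algebra_simps)
  ultimately have "\<bar>(4 * r - 2) * \<psi> (1 - ?h) + (1 - r) * \<psi> (1 - 2 * ?h) + 2 * ?h * f / D\<bar> \<le> 10 * ?M * ?h\<^sup>2"
    using abs_triangle_ineq[of "\<psi> (1 - 2 * ?h) - 2 * \<psi> (1 - ?h) + \<psi> 1"] by linarith
  then have stencil:
    "\<bar>((4 * r - 2) * \<psi> (1 - ?h) + (1 - r) * \<psi> (1 - 2 * ?h) + 2 * ?h * f / D) / ?h\<^sup>2\<bar> \<le> 10 * ?M"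
    using h by (simp add: abs_divide pos_divide_le_eq)
  have xx: "\<bar>\<psi>xx (1 - ?h)\<bar> \<le> ?M" using PC21_second_abs_le[OF pc] h by simp
  have res: "diffusion_residual \<alpha>0 \<beta>0 \<alpha>1 \<beta>1 n \<psi> \<psi>x \<psi>xx n
      = \<psi>xx (1 - ?h) - ((4 * r - 2) * \<psi> (1 - ?h) + (1 - r) * \<psi> (1 - 2 * ?h) + 2 * ?h * f / D) / ?h\<^sup>2"
    using n matvec_Lmat_last[of n] grid
    by (simp add: diffusion_residual_def Rn_def r_def D_def f_def add_divide_distrib)
  have "\<bar>\<psi>xx (1 - ?h) - ((4 * r - 2) * \<psi> (1 - ?h) + (1 - r) * \<psi> (1 - 2 * ?h) + 2 * ?h * f / D) / ?h\<^sup>2\<bar>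
      \<le> ?M + 10 * ?M"
    by (rule order_trans[OF abs_triangle_ineq4 add_mono[OF xx stencil]])
  then show ?thesis unfolding res by simp
qed

lemma diffusion_residual_interior:
  assumes pc: "PC21 \<psi> \<psi>x \<psi>xx" and i: "2 \<le> i" "i + 1 \<le> n"
  shows "\<bar>diffusion_residual \<alpha>0 \<beta>0 \<alpha>1 \<beta>1 n \<psi> \<psi>x \<psi>xx i\<bar> \<le> 3 * PC21_norm \<psi> \<psi>xx"
    and "(\<And>u. u \<in> {real i * hstep n - hstep n..real i * hstep n + hstep n} \<Longrightarrow>
            \<psi>xx differentiable (at u within {0..1})) \<Longrightarrow>
         \<bar>diffusion_residual \<alpha>0 \<beta>0 \<alpha>1 \<beta>1 n \<psi> \<psi>x \<psi>xx i\<bar> \<le> 2 * PC21_norm \<psi> \<psi>xx * hstep n"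
proof -
  let ?M = "PC21_norm \<psi> \<psi>xx" and ?h = "hstep n" and ?x = "real i * hstep n"
  have h: "0 < ?h" "0 \<le> ?x - ?h" "?x + ?h \<le> 1"
    using i hstep_pos[of n] grid_point_le[of "i + 1" n] by (auto simp: algebra_simps)
  have res: "diffusion_residual \<alpha>0 \<beta>0 \<alpha>1 \<beta>1 n \<psi> \<psi>x \<psi>xx i
      = \<psi>xx ?x - (\<psi> (?x - ?h) - 2 * \<psi> ?x + \<psi> (?x + ?h)) / ?h\<^sup>2"
    using i matvec_Lmat_interior[of i n] by (simp add: diffusion_residual_def Rn_def of_nat_diff algebra_simps)
  have "\<bar>(\<psi> (?x - ?h) - 2 * \<psi> ?x + \<psi> (?x + ?h)) / ?h\<^sup>2\<bar> \<le> 2 * ?M"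
    using PC21_second_difference[OF pc h(2,3)] h(1) by (simp add: abs_divide pos_divide_le_eq)
  moreover have "\<bar>\<psi>xx ?x\<bar> \<le> ?M" using PC21_second_abs_le[OF pc] h by simp
  ultimately show "\<bar>diffusion_residual \<alpha>0 \<beta>0 \<alpha>1 \<beta>1 n \<psi> \<psi>x \<psi>xx i\<bar> \<le> 3 * ?M" unfolding res by linarith
  assume "\<And>u. u \<in> {?x - ?h..?x + ?h} \<Longrightarrow> \<psi>xx differentiable (at u within {0..1})"
  then have "\<bar>\<psi> (?x - ?h) - 2 * \<psi> ?x + \<psi> (?x + ?h) - ?h\<^sup>2 * \<psi>xx ?x\<bar> \<le> 2 * ?M * ?h ^ 3"
    by (rule PC21_second_difference_smooth[OF pc h])
  moreover have "diffusion_residual \<alpha>0 \<beta>0 \<alpha>1 \<beta>1 n \<psi> \<psi>x \<psi>xx i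
      = - ((\<psi> (?x - ?h) - 2 * \<psi> ?x + \<psi> (?x + ?h) - ?h\<^sup>2 * \<psi>xx ?x) / ?h\<^sup>2)"
    unfolding res using h(1) by (simp add: field_simps)
  ultimately show "\<bar>diffusion_residual \<alpha>0 \<beta>0 \<alpha>1 \<beta>1 n \<psi> \<psi>x \<psi>xx i\<bar> \<le> 2 * ?M * ?h"
    using h(1) by (simp add: abs_divide pos_divide_le_eq power2_eq_square power3_eq_cube mult_ac)
qed

text \<open>If \<open>\<alpha>0 = 0\<close>, then \<open>2 * \<bar>\<beta>0\<bar> / \<bar>\<alpha>0\<bar> = 0\<close> in HOL; the Robin condition then forces \<open>\<psi> 0 = 0\<close>,
  so the factor \<open>1 / h\<close> meets a value of size \<open>O(h)\<close>.\<close>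
lemma PC21_boundary_quotient_bound:
  fixes h :: real
  assumes pc: "PC21 \<psi> \<psi>x \<psi>xx" and bc: "\<alpha>0 * \<psi>x 0 + \<beta>0 * \<psi> 0 = 0" and h: "0 < h" "h \<le> 1"
    and nz: "\<alpha>0 - h * \<beta>0 \<noteq> 0" and small: "\<alpha>0 = 0 \<or> 2 * h * \<bar>\<beta>0\<bar> \<le> \<bar>\<alpha>0\<bar>"
  shows "\<bar>- \<beta>0 / (\<alpha>0 - h * \<beta>0) * \<psi> h\<bar> \<le> (2 + 2 * \<bar>\<beta>0\<bar> / \<bar>\<alpha>0\<bar>) * PC21_norm \<psi> \<psi>xx"
proof (cases "\<alpha>0 = 0")
  case True
  then have \<psi>0: "\<psi> 0 = 0" and q: "- \<beta>0 / (\<alpha>0 - h * \<beta>0) = 1 / h" using bc nz by auto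
  have "\<bar>\<psi> h\<bar> \<le> PC21_norm \<psi> \<psi>xx * h"
    using lipschitz_onD[OF PC21_lipschitz[OF pc], of h 0] h \<psi>0 by (simp add: dist_real_def)
  also have "\<dots> \<le> 2 * PC21_norm \<psi> \<psi>xx * h"
    by (intro mult_right_mono) (use PC21_norm_nonneg[OF pc] h in auto)
  finally show ?thesis using True h q by (simp add: abs_divide pos_divide_le_eq)
next
  case False
  then have "\<bar>\<alpha>0\<bar> / 2 \<le> \<bar>\<alpha>0 - h * \<beta>0\<bar>"
    using small h abs_triangle_ineq2[of \<alpha>0 "h * \<beta>0"] by (auto simp: abs_mult)
  then have "\<bar>\<beta>0\<bar> / \<bar>\<alpha>0 - h * \<beta>0\<bar> \<le> \<bar>\<beta>0\<bar> / (\<bar>\<alpha>0\<bar> / 2)"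
    using False nz by (intro divide_left_mono) auto
  then have "\<bar>- \<beta>0 / (\<alpha>0 - h * \<beta>0)\<bar> * \<bar>\<psi> h\<bar> \<le> (2 * \<bar>\<beta>0\<bar> / \<bar>\<alpha>0\<bar>) * PC21_norm \<psi> \<psi>xx"
    using PC21_abs_le[OF pc, of h] h by (intro mult_mono) (auto simp: abs_divide mult.commute)
  then show ?thesis using PC21_norm_nonneg[OF pc] by (simp add: abs_mult algebra_simps)
qed

lemma convection_residual_first_row:
  assumes pc: "PC21 \<psi> \<psi>x \<psi>xx" and bc: "\<alpha>0 * \<psi>x 0 + \<beta>0 * \<psi> 0 = 0" and n: "1 \<le> n"
    and nz: "\<alpha>0 - hstep n * \<beta>0 \<noteq> 0" and small: "\<alpha>0 = 0 \<or> 2 * hstep n * \<bar>\<beta>0\<bar> \<le> \<bar>\<alpha>0\<bar>"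
  shows "\<bar>convection_residual \<alpha>0 \<beta>0 n \<psi> \<psi>x 1\<bar> \<le> (3 + 2 * \<bar>\<beta>0\<bar> / \<bar>\<alpha>0\<bar>) * PC21_norm \<psi> \<psi>xx"
proof -
  let ?M = "PC21_norm \<psi> \<psi>xx" and ?h = "hstep n"
  have h: "0 < ?h" "?h \<le> 1" by (auto simp: hstep_def)
  have "convection_residual \<alpha>0 \<beta>0 n \<psi> \<psi>x 1 = \<psi>x ?h - q0 \<alpha>0 \<beta>0 n * \<psi> ?h"
    using n matvec_Dmat_first[of n] by (simp add: convection_residual_def Rn_def)
  moreover have "\<bar>q0 \<alpha>0 \<beta>0 n * \<psi> ?h\<bar> \<le> (2 + 2 * \<bar>\<beta>0\<bar> / \<bar>\<alpha>0\<bar>) * ?M"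
    unfolding q0_def by (rule PC21_boundary_quotient_bound[OF pc bc h nz small])
  moreover have "\<bar>\<psi>x ?h\<bar> \<le> ?M" using PC21_deriv_abs_le[OF pc] h by simp
  ultimately show ?thesis by (simp add: algebra_simps)
qed

lemma convection_residual_interior:
  assumes pc: "PC21 \<psi> \<psi>x \<psi>xx" and i: "2 \<le> i" "i \<le> n"
  shows "\<bar>convection_residual \<alpha>0 \<beta>0 n \<psi> \<psi>x i\<bar> \<le> PC21_norm \<psi> \<psi>xx * hstep n"
proof -
  let ?h = "hstep n" and ?x = "real i * hstep n"
  have "convection_residual \<alpha>0 \<beta>0 n \<psi> \<psi>x i = \<psi>x ?x - (\<psi> ?x - \<psi> (?x - ?h)) / ?h"
    using i matvec_Dmat[of i n] by (simp add: convection_residual_def Rn_def of_nat_diff algebra_simps)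
  also have "\<bar>\<dots>\<bar> \<le> PC21_norm \<psi> \<psi>xx * ?h"
    using i hstep_pos[of n] grid_point_le[of i n]
    by (intro PC21_backward_difference[OF pc]) (auto simp: algebra_simps)
  finally show ?thesis .
qed

lemma lipschitz_on_mult_bounded:
  fixes f g :: "real \<Rightarrow> real"
  assumes "A-lipschitz_on X f" "B-lipschitz_on X g" "0 \<le> F" "0 \<le> G"
    and "\<And>x. x \<in> X \<Longrightarrow> \<bar>f x\<bar> \<le> F" "\<And>x. x \<in> X \<Longrightarrow> \<bar>g x\<bar> \<le> G"
  shows "(F * B + G * A)-lipschitz_on X (\<lambda>x. f x * g x)"
proof (rule lipschitz_onI)
  fix x y assume xy: "x \<in> X" "y \<in> X"
  have "f x * g x - f y * g y = f x * (g x - g y) + g y * (f x - f y)" by (simp add: algebra_simps)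
  moreover have "\<bar>f x * (g x - g y)\<bar> \<le> F * (B * dist x y)" "\<bar>g y * (f x - f y)\<bar> \<le> G * (A * dist x y)"
    using lipschitz_onD[OF assms(1) xy] lipschitz_onD[OF assms(2) xy] assms(3-6) xy
    by (auto simp: abs_mult dist_real_def intro!: mult_mono)
  ultimately show "dist (f x * g x) (f y * g y) \<le> (F * B + G * A) * dist x y"
    by (simp add: dist_real_def algebra_simps)
next
  show "0 \<le> F * B + G * A"
    using assms(3,4) lipschitz_on_nonneg[OF assms(1)] lipschitz_on_nonneg[OF assms(2)] by simp
qed

lemma riemann_sum_error_lipschitz:
  fixes g :: "real \<Rightarrow> real"
  assumes lip: "L-lipschitz_on {0..1} g" and h: "h > 0"
  shows "real j * h \<le> 1 \<Longrightarrow> \<bar>integral {0..real j * h} g - h * (\<Sum>m=1..j. g (real m * h))\<bar> \<le> L * h * (real j * h)"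
proof (induction j)
  case (Suc j)
  define a where "a = real j * h"
  define b where "b = real (Suc j) * h"
  have ab: "b = a + h" "0 \<le> a" "b \<le> 1" using Suc.prems h by (auto simp: a_def b_def algebra_simps)
  have "g integrable_on {0..b}"
    by (rule integrable_continuous_real[OF continuous_on_subset[OF lipschitz_on_continuous_on[OF lip]]])
      (use ab in auto)
  then have split: "integral {0..a} g + integral {a..b} g = integral {0..b} g"
    using ab h by (intro Henstock_Kurzweil_Integration.integral_combine) auto
  have "((\<lambda>s. g s - g b) has_integral (integral {a..b} g - h * g b)) {a..b}"
    using integrable_subinterval_real[OF \<open>g integrable_on {0..b}\<close>, of a b] ab h has_integral_const_real[of "g b" a b]
    by (intro has_integral_diff) (auto simp: content_real)
  then have piece: "\<bar>integral {a..b} g - h * g b\<bar> \<le> (L * h) * (b - a)"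
  proof (rule has_integral_abs_bound)
    fix s assume "s \<in> {a..b}"
    then have "\<bar>g s - g b\<bar> \<le> L * \<bar>s - b\<bar>"
      using lipschitz_onD[OF lip, of s b] ab by (simp add: dist_real_def)
    also have "\<dots> \<le> L * h" using \<open>s \<in> {a..b}\<close> ab lipschitz_on_nonneg[OF lip] by (intro mult_left_mono) auto
    finally show "\<bar>g s - g b\<bar> \<le> L * h" .
  qed (use ab h lipschitz_on_nonneg[OF lip] in auto)
  have "\<bar>integral {0..a} g - h * (\<Sum>m=1..j. g (real m * h))\<bar> \<le> L * h * a"
    using Suc ab h unfolding a_def by auto
  then show ?case
    using piece split ab(1) unfolding b_def[symmetric] a_def[symmetric]
    by (simp add: b_def algebra_simps)
qed simp

lemma quadrature_residual_bound:
  assumes pc: "PC21 \<psi> \<psi>x \<psi>xx" and i: "i \<le> n" and "0 \<le> Kp"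
    and bnd: "\<And>s. s \<in> {0..1} \<Longrightarrow> \<bar>\<phi> (real i * hstep n) s\<bar> \<le> Kp"
    and lip: "Kp-lipschitz_on {0..1} (\<phi> (real i * hstep n))"
  shows "\<bar>quadrature_residual \<phi> n \<psi> i\<bar> \<le> 2 * Kp * PC21_norm \<psi> \<psi>xx * hstep n"
proof -
  let ?M = "PC21_norm \<psi> \<psi>xx" and ?h = "hstep n" and ?x = "real i * hstep n"
  have x: "?x \<le> 1" using grid_point_le[OF i] hstep_pos[of n] by linarith
  have "(Kp * ?M + ?M * Kp)-lipschitz_on {0..1} (\<lambda>s. \<phi> ?x s * \<psi> s)"
    using PC21_abs_le[OF pc] PC21_norm_nonneg[OF pc] assms(3)
    by (intro lipschitz_on_mult_bounded[OF lip PC21_lipschitz[OF pc] _ _ bnd]) auto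
  then have "\<bar>integral {0..?x} (\<lambda>s. \<phi> ?x s * \<psi> s) - ?h * (\<Sum>m=1..i. \<phi> ?x (real m * ?h) * \<psi> (real m * ?h))\<bar>
      \<le> (Kp * ?M + ?M * Kp) * ?h * ?x"
    using x hstep_pos[of n] by (intro riemann_sum_error_lipschitz) auto
  also have "\<dots> \<le> (Kp * ?M + ?M * Kp) * ?h * 1"
    using x hstep_pos[of n] PC21_norm_nonneg[OF pc] assms(3) by (intro mult_left_mono) auto
  finally show ?thesis
    using i by (simp add: quadrature_residual_def matvec_Phimat Rn_def algebra_simps)
qed

section \<open>The discrete estimate\<close>

definition coefficient_bounds ::
    "(real \<Rightarrow> real) \<Rightarrow> (real \<Rightarrow> real) \<Rightarrow> (real \<Rightarrow> real \<Rightarrow> real) \<Rightarrow> real \<Rightarrow> real \<Rightarrow> bool"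
  where "coefficient_bounds \<theta> \<sigma> \<phi> Kc Kp \<longleftrightarrow> 0 \<le> Kc \<and> 0 \<le> Kp \<and>
    (\<forall>x\<in>{0..1}. \<bar>\<theta> x\<bar> \<le> Kc \<and> \<bar>\<sigma> x\<bar> \<le> Kc) \<and>
    (\<forall>x\<in>{0..1}. (\<forall>s\<in>{0..1}. \<bar>\<phi> x s\<bar> \<le> Kp) \<and> Kp-lipschitz_on {0..1} (\<phi> x))"

text \<open>The smallness conditions keep the boundary coefficients \<open>r0\<close>, \<open>r1\<close> and \<open>q0\<close> bounded uniformly in \<open>n\<close>.\<close>
definition fine_mesh :: "real \<Rightarrow> real \<Rightarrow> real \<Rightarrow> real \<Rightarrow> nat \<Rightarrow> bool"
  where "fine_mesh \<alpha>0 \<beta>0 \<alpha>1 \<beta>1 n \<longleftrightarrow> 3 \<le> n \<and>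
    3 * \<alpha>0 - 2 * hstep n * \<beta>0 \<noteq> 0 \<and> 3 * \<alpha>1 + 2 * hstep n * \<beta>1 \<noteq> 0 \<and> \<alpha>0 - hstep n * \<beta>0 \<noteq> 0 \<and>
    (\<alpha>0 = 0 \<or> 2 * hstep n * \<bar>\<beta>0\<bar> \<le> \<bar>\<alpha>0\<bar>) \<and> (\<alpha>1 = 0 \<or> 2 * hstep n * \<bar>\<beta>1\<bar> \<le> \<bar>\<alpha>1\<bar>)"

lemma abs_lincomb_le:
  fixes t s a b r K A B R :: real
  assumes "\<bar>t\<bar> \<le> K" "\<bar>s\<bar> \<le> K" "\<bar>a\<bar> \<le> A" "\<bar>b\<bar> \<le> B" "\<bar>r\<bar> \<le> R"
  shows "\<bar>t * a + s * b + r\<bar> \<le> K * A + K * B + R"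
proof -
  have "\<bar>t * a\<bar> \<le> K * A" "\<bar>s * b\<bar> \<le> K * B"
    using assms(1-4) by (auto simp: abs_mult intro!: mult_mono order_trans[OF abs_ge_zero])
  then show ?thesis using assms(5) by (simp only: abs_le_iff) linarith
qed

lemma residuals_abs_le:
  assumes pc: "PC21 \<psi> \<psi>x \<psi>xx" and bc: "\<alpha>0 * \<psi>x 0 + \<beta>0 * \<psi> 0 = 0"
    and n: "fine_mesh \<alpha>0 \<beta>0 \<alpha>1 \<beta>1 n" and i: "i \<in> {1..n}"
  shows "\<bar>diffusion_residual \<alpha>0 \<beta>0 \<alpha>1 \<beta>1 n \<psi> \<psi>x \<psi>xx i\<bar> \<le> 11 * PC21_norm \<psi> \<psi>xx"
    and "\<bar>convection_residual \<alpha>0 \<beta>0 n \<psi> \<psi>x i\<bar> \<le> (3 + 2 * \<bar>\<beta>0\<bar> / \<bar>\<alpha>0\<bar>) * PC21_norm \<psi> \<psi>xx"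
proof -
  let ?M = "PC21_norm \<psi> \<psi>xx" and ?h = "hstep n"
  have n3: "3 \<le> n"
    and nz: "3 * \<alpha>0 - 2 * ?h * \<beta>0 \<noteq> 0" "3 * \<alpha>1 + 2 * ?h * \<beta>1 \<noteq> 0" "\<alpha>0 - ?h * \<beta>0 \<noteq> 0"
    and small: "\<alpha>0 = 0 \<or> 2 * ?h * \<bar>\<beta>0\<bar> \<le> \<bar>\<alpha>0\<bar>" "\<alpha>1 = 0 \<or> 2 * ?h * \<bar>\<beta>1\<bar> \<le> \<bar>\<alpha>1\<bar>"
    using n unfolding fine_mesh_def by auto
  have M: "0 \<le> ?M" by (rule PC21_norm_nonneg[OF pc])
  consider "i = 1" | "i = n" | "2 \<le> i" "i + 1 \<le> n" using i n3 by force
  then show "\<bar>diffusion_residual \<alpha>0 \<beta>0 \<alpha>1 \<beta>1 n \<psi> \<psi>x \<psi>xx i\<bar> \<le> 11 * ?M"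
  proof cases
    case 1
    then show ?thesis using diffusion_residual_first_row[OF pc bc n3 nz(1) small(1)] by simp
  next
    case 2
    then show ?thesis using diffusion_residual_last_row[OF pc n3 nz(2) small(2)] by simp
  next
    case 3
    then show ?thesis
      using diffusion_residual_interior(1)[OF pc 3, of \<alpha>0 \<beta>0 \<alpha>1 \<beta>1] M
      by linarith
  qed
  show "\<bar>convection_residual \<alpha>0 \<beta>0 n \<psi> \<psi>x i\<bar> \<le> (3 + 2 * \<bar>\<beta>0\<bar> / \<bar>\<alpha>0\<bar>) * ?M"
  proof (cases "i = 1")
    case True
    then show ?thesis using convection_residual_first_row[OF pc bc _ nz(3) small(1)] n3 by simp
  next
    case False
    then have "\<bar>convection_residual \<alpha>0 \<beta>0 n \<psi> \<psi>x i\<bar> \<le> ?M * ?h"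
      using i by (intro convection_residual_interior[OF pc]) auto
    also have "\<dots> \<le> ?M" using M by (intro mult_left_le) (auto simp: hstep_def)
    also have "\<dots> \<le> (3 + 2 * \<bar>\<beta>0\<bar> / \<bar>\<alpha>0\<bar>) * ?M"
      using M mult_right_mono[of 1 "3 + 2 * \<bar>\<beta>0\<bar> / \<bar>\<alpha>0\<bar>" ?M] by simp
    finally show ?thesis .
  qed
qed

lemma truncation_error_row_bound:
  assumes pc: "PC21 \<psi> \<psi>x \<psi>xx" and bc: "\<alpha>0 * \<psi>x 0 + \<beta>0 * \<psi> 0 = 0"
    and K: "coefficient_bounds \<theta> \<sigma> \<phi> Kc Kp" and n: "fine_mesh \<alpha>0 \<beta>0 \<alpha>1 \<beta>1 n" and i: "i \<in> {1..n}"
  shows "\<bar>truncation_error \<theta> \<sigma> lam \<phi> \<alpha>0 \<beta>0 \<alpha>1 \<beta>1 n \<psi> \<psi>x \<psi>xx i\<bar>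
    \<le> ((14 + 2 * \<bar>\<beta>0\<bar> / \<bar>\<alpha>0\<bar>) * Kc + 2 * Kp) * PC21_norm \<psi> \<psi>xx"
proof -
  let ?M = "PC21_norm \<psi> \<psi>xx" and ?h = "hstep n" and ?x = "real i * hstep n"
  have x: "?x \<in> {0..1}" using i grid_point_le[of i n] hstep_pos[of n] by auto
  have Kc: "\<bar>\<theta> ?x\<bar> \<le> Kc" "\<bar>\<sigma> ?x\<bar> \<le> Kc" and Kp: "0 \<le> Kp"
    using K x unfolding coefficient_bounds_def by auto
  have "\<bar>quadrature_residual \<phi> n \<psi> i\<bar> \<le> 2 * Kp * ?M * ?h"
    using K x i by (intro quadrature_residual_bound[OF pc]) (auto simp: coefficient_bounds_def)
  also have "\<dots> \<le> 2 * Kp * ?M"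
    using Kp PC21_norm_nonneg[OF pc] by (intro mult_left_le) (auto simp: hstep_def)
  finally have "\<bar>truncation_error \<theta> \<sigma> lam \<phi> \<alpha>0 \<beta>0 \<alpha>1 \<beta>1 n \<psi> \<psi>x \<psi>xx i\<bar>
      \<le> Kc * (11 * ?M) + Kc * ((3 + 2 * \<bar>\<beta>0\<bar> / \<bar>\<alpha>0\<bar>) * ?M) + 2 * Kp * ?M"
    unfolding truncation_error_split[OF i] using Kc residuals_abs_le[OF pc bc n i]
    by (intro abs_lincomb_le)
  then show ?thesis by (simp add: algebra_simps)
qed

lemma truncation_error_row_bound_regular:
  assumes pc: "PC21 \<psi> \<psi>x \<psi>xx"
    and nd: "{x\<in>{0..1}. \<not> \<psi>xx differentiable (at x within {0..1})} \<subseteq> I"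
    and K: "coefficient_bounds \<theta> \<sigma> \<phi> Kc Kp" and i: "2 \<le> i" "i + 1 \<le> n"
    and far: "\<forall>c\<in>I. hstep n < \<bar>real i * hstep n - c\<bar>"
  shows "\<bar>truncation_error \<theta> \<sigma> lam \<phi> \<alpha>0 \<beta>0 \<alpha>1 \<beta>1 n \<psi> \<psi>x \<psi>xx i\<bar>
    \<le> (3 * Kc + 2 * Kp) * PC21_norm \<psi> \<psi>xx * hstep n"
proof -
  let ?M = "PC21_norm \<psi> \<psi>xx" and ?h = "hstep n" and ?x = "real i * hstep n"
  have x: "?x \<in> {0..1}" "?x + ?h \<le> 1" "0 \<le> ?x - ?h"
    using i grid_point_le[of "i + 1" n] hstep_pos[of n] by (auto simp: algebra_simps)
  have Kc: "\<bar>\<theta> ?x\<bar> \<le> Kc" "\<bar>\<sigma> ?x\<bar> \<le> Kc"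
    using K x unfolding coefficient_bounds_def by auto
  have "\<psi>xx differentiable (at u within {0..1})" if u: "u \<in> {?x - ?h..?x + ?h}" for u
  proof -
    have "\<bar>?x - u\<bar> \<le> ?h" using u by (simp add: abs_le_iff)
    then have "u \<notin> I" using far by force
    moreover have "u \<in> {0..1}" using u x by auto
    ultimately show ?thesis using nd by blast
  qed
  then have "\<bar>diffusion_residual \<alpha>0 \<beta>0 \<alpha>1 \<beta>1 n \<psi> \<psi>x \<psi>xx i\<bar> \<le> 2 * ?M * ?h"
    by (rule diffusion_residual_interior(2)[OF pc i])
  moreover have "\<bar>quadrature_residual \<phi> n \<psi> i\<bar> \<le> 2 * Kp * ?M * ?h"
    using K x i by (intro quadrature_residual_bound[OF pc]) (auto simp: coefficient_bounds_def)
  moreover have "\<bar>convection_residual \<alpha>0 \<beta>0 n \<psi> \<psi>x i\<bar> \<le> ?M * ?h"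
    using i by (intro convection_residual_interior[OF pc]) auto
  moreover have "i \<in> {1..n}" using i by auto
  ultimately have "\<bar>truncation_error \<theta> \<sigma> lam \<phi> \<alpha>0 \<beta>0 \<alpha>1 \<beta>1 n \<psi> \<psi>x \<psi>xx i\<bar>
      \<le> Kc * (2 * ?M * ?h) + Kc * (?M * ?h) + 2 * Kp * ?M * ?h"
    using Kc truncation_error_split[of i n] by (simp only:) (rule abs_lincomb_le)
  then show ?thesis by (simp add: algebra_simps)
qed

lemma card_rows_near_le:
  fixes I :: "real set"
  assumes "finite I" "h > 0"
  shows "card {i\<in>{1..n}. i = 1 \<or> i = n \<or> (\<exists>c\<in>I. \<bar>real i * h - c\<bar> \<le> h)} \<le> 2 + 3 * card I"
proof -
  let ?S = "\<lambda>c. {i::nat. \<bar>real i * h - c\<bar> \<le> h}"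
  have "card {i\<in>{1..n}. i = 1 \<or> i = n \<or> (\<exists>c\<in>I. \<bar>real i * h - c\<bar> \<le> h)} \<le> card ({1, n} \<union> (\<Union>c\<in>I. ?S c))"
    using assms grid_points_near(1) by (intro card_mono) auto
  also have "\<dots> \<le> card {1, n} + card (\<Union>c\<in>I. ?S c)" by (rule card_Un_le)
  also have "card (\<Union>c\<in>I. ?S c) \<le> (\<Sum>c\<in>I. card (?S c))" by (rule card_UN_le[OF assms(1)])
  also have "\<dots> \<le> (\<Sum>c\<in>I. 3)" using grid_points_near(2)[OF assms(2)] by (intro sum_mono) auto
  also have "card {1, n} \<le> 2" by (simp add: card_insert_le_m1)
  finally show ?thesis by simp
qed

lemma sum_squares_le_two_level:
  fixes E :: "'a \<Rightarrow> real" and a b :: real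
  assumes "finite A" "B \<subseteq> A" "\<And>i. i \<in> A \<Longrightarrow> \<bar>E i\<bar> \<le> b" "\<And>i. i \<in> A - B \<Longrightarrow> \<bar>E i\<bar> \<le> a"
  shows "(\<Sum>i\<in>A. (E i)\<^sup>2) \<le> real (card A) * a\<^sup>2 + real (card B) * b\<^sup>2"
proof -
  have sq: "x\<^sup>2 \<le> y\<^sup>2" if "\<bar>x\<bar> \<le> y" for x y :: real
    using that abs_le_square_iff[of x y] by auto
  have "(\<Sum>i\<in>A. (E i)\<^sup>2) = (\<Sum>i\<in>A - B. (E i)\<^sup>2) + (\<Sum>i\<in>B. (E i)\<^sup>2)"
    using assms(1,2) by (metis add.commute sum.subset_diff)
  also have "\<dots> \<le> (\<Sum>i\<in>A - B. a\<^sup>2) + (\<Sum>i\<in>B. b\<^sup>2)"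
    using assms(2-4) by (intro add_mono sum_mono sq) auto
  also have "\<dots> \<le> real (card A) * a\<^sup>2 + real (card B) * b\<^sup>2"
    using assms(1) card_mono[of A "A - B"] by (auto intro!: mult_right_mono)
  finally show ?thesis .
qed

lemma eventually_boundary_coefficient_small:
  "\<forall>\<^sub>F n in sequentially. \<alpha> = 0 \<or> 2 * hstep n * \<bar>\<beta>\<bar> \<le> \<bar>\<alpha>\<bar>"
proof (cases "\<alpha> = 0")
  case False
  have "(\<lambda>n. 2 * \<bar>\<beta>\<bar> * inverse (real (Suc n))) \<longlonglongrightarrow> 2 * \<bar>\<beta>\<bar> * 0"
    by (intro tendsto_mult tendsto_const LIMSEQ_inverse_real_of_nat)
  then have "\<forall>\<^sub>F n in sequentially. 2 * \<bar>\<beta>\<bar> * inverse (real (Suc n)) < \<bar>\<alpha>\<bar>"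
    using False by (intro order_tendstoD(2)) auto
  then show ?thesis
    by (rule eventually_mono) (auto simp: hstep_def divide_inverse mult_ac add.commute)
qed simp

lemma eventually_fine_mesh:
  assumes "\<forall>n\<ge>1. 3 * \<alpha>0 - 2 * hstep n * \<beta>0 \<noteq> 0 \<and> 3 * \<alpha>1 + 2 * hstep n * \<beta>1 \<noteq> 0
                 \<and> \<alpha>0 - hstep n * \<beta>0 \<noteq> 0"
  shows "\<forall>\<^sub>F n in sequentially. fine_mesh \<alpha>0 \<beta>0 \<alpha>1 \<beta>1 n"
  using eventually_ge_at_top[of 3] eventually_boundary_coefficient_small[of \<alpha>0 \<beta>0]
    eventually_boundary_coefficient_small[of \<alpha>1 \<beta>1]
  by eventually_elim (use assms in \<open>auto simp: fine_mesh_def\<close>)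

lemma SUP_le_mult_SUP:
  fixes f g :: "'a \<Rightarrow> real"
  assumes "S \<noteq> {}" "bdd_above (g ` S)" "0 \<le> c" "\<And>t. t \<in> S \<Longrightarrow> f t \<le> c * g t"
  shows "(SUP t\<in>S. f t) \<le> c * (SUP t\<in>S. g t)"
proof (rule cSUP_least[OF assms(1)])
  fix t assume t: "t \<in> S"
  have "c * g t \<le> c * (SUP t\<in>S. g t)" by (intro mult_left_mono cSUP_upper[OF t assms(2)] assms(3))
  then show "f t \<le> c * (SUP t\<in>S. g t)" using assms(4)[OF t] by linarith
qed

lemma Iset_finite:
  assumes "PCk 1 \<theta>" "PCk 1 \<sigma>" "PCk 1 lam"
  shows "finite (Iset \<theta> \<sigma> lam)"
proof (rule finite_subset)
  show "Iset \<theta> \<sigma> lam \<subseteq> {x\<in>{0..1}. \<not> \<theta> differentiable (at x within {0..1})}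
      \<union> {x\<in>{0..1}. \<not> \<sigma> differentiable (at x within {0..1})}
      \<union> {x\<in>{0..1}. \<not> lam differentiable (at x within {0..1})}"
    unfolding Iset_def by blast
qed (use PCk_finite_nondifferentiable assms in auto)

text \<open>The first summand controls the regular rows (after division by \<open>h\<close>), the second the at most
  \<open>2 + 3 k\<close> exceptional rows near the boundary and near the \<open>k\<close> nonsmooth points.\<close>
definition truncation_constant :: "real \<Rightarrow> real \<Rightarrow> nat \<Rightarrow> real \<Rightarrow> real" where
  "truncation_constant Kc Kp k q = sqrt ((3 * Kc + 2 * Kp)\<^sup>2 + (2 + 3 * k) * ((14 + 2 * q) * Kc + 2 * Kp)\<^sup>2)"

lemma truncation_constant_nonneg: "0 \<le> truncation_constant Kc Kp k q"
  by (simp add: truncation_constant_def)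

lemma mesh_size_sum_le_1: "real n * (hstep n)\<^sup>2 \<le> 1"
proof -
  have "real n * hstep n \<le> 1" "hstep n \<le> 1" by (auto simp: hstep_def field_simps)
  then show ?thesis
    using mult_mono[of "real n * hstep n" 1 "hstep n" 1] hstep_pos[of n] by (simp add: power2_eq_square mult.assoc)
qed

lemma norm2d_truncation_error_le:
  fixes I :: "real set"
  assumes pc: "PC21 \<psi> \<psi>x \<psi>xx" and bc: "\<alpha>0 * \<psi>x 0 + \<beta>0 * \<psi> 0 = 0"
    and nd: "{x\<in>{0..1}. \<not> \<psi>xx differentiable (at x within {0..1})} \<subseteq> I" and "finite I"
    and K: "coefficient_bounds \<theta> \<sigma> \<phi> Kc Kp" and n: "fine_mesh \<alpha>0 \<beta>0 \<alpha>1 \<beta>1 n"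
  shows "norm2d n (truncation_error \<theta> \<sigma> lam \<phi> \<alpha>0 \<beta>0 \<alpha>1 \<beta>1 n \<psi> \<psi>x \<psi>xx)
    \<le> truncation_constant Kc Kp (card I) (\<bar>\<beta>0\<bar> / \<bar>\<alpha>0\<bar>) * sqrt (hstep n) * PC21_norm \<psi> \<psi>xx"
proof -
  let ?E = "truncation_error \<theta> \<sigma> lam \<phi> \<alpha>0 \<beta>0 \<alpha>1 \<beta>1 n \<psi> \<psi>x \<psi>xx" and ?h = "hstep n"
    and ?M = "PC21_norm \<psi> \<psi>xx"
  let ?C1 = "3 * Kc + 2 * Kp" and ?C2 = "(14 + 2 * (\<bar>\<beta>0\<bar> / \<bar>\<alpha>0\<bar>)) * Kc + 2 * Kp"
  define B where "B = {i\<in>{1..n}. i = 1 \<or> i = n \<or> (\<exists>c\<in>I. \<bar>real i * ?h - c\<bar> \<le> ?h)}"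
  have "(\<Sum>i\<in>{1..n}. (?E i)\<^sup>2) \<le> card {1..n} * (?C1 * ?M * ?h)\<^sup>2 + card B * (?C2 * ?M)\<^sup>2"
  proof (rule sum_squares_le_two_level)
    show "\<bar>?E i\<bar> \<le> ?C2 * ?M" if "i \<in> {1..n}" for i
      using truncation_error_row_bound[OF pc bc K n that] by simp
    show "\<bar>?E i\<bar> \<le> ?C1 * ?M * ?h" if "i \<in> {1..n} - B" for i
      using that by (intro truncation_error_row_bound_regular[OF pc nd K]) (auto simp: B_def not_le)
  qed (auto simp: B_def)
  also have "\<dots> \<le> (?C1\<^sup>2 + (2 + 3 * card I) * ?C2\<^sup>2) * ?M\<^sup>2"
  proof -
    have "real n * (?C1 * ?M * ?h)\<^sup>2 \<le> ?C1\<^sup>2 * ?M\<^sup>2"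
      using mult_right_mono[OF mesh_size_sum_le_1, of "(?C1 * ?M)\<^sup>2" n] by (simp add: power_mult_distrib mult_ac)
    moreover have "card B \<le> 2 + 3 * card I"
      unfolding B_def by (rule card_rows_near_le[OF assms(4) hstep_pos])
    then have "card B * (?C2 * ?M)\<^sup>2 \<le> (2 + 3 * card I) * ?C2\<^sup>2 * ?M\<^sup>2"
      using mult_right_mono[of "card B" "2 + 3 * card I" "(?C2 * ?M)\<^sup>2"] by (simp add: power_mult_distrib)
    ultimately show ?thesis by (simp add: algebra_simps)
  qed
  finally have "sqrt (\<Sum>i=1..n. (?E i)\<^sup>2) \<le> truncation_constant Kc Kp (card I) (\<bar>\<beta>0\<bar> / \<bar>\<alpha>0\<bar>) * ?M"
    using PC21_norm_nonneg[OF pc] real_sqrt_le_mono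
    by (fastforce simp: real_sqrt_mult truncation_constant_def)
  then show ?thesis
    unfolding norm2d_def using mult_left_mono[OF _ real_sqrt_ge_zero[OF less_imp_le[OF hstep_pos]]]
    by (fastforce simp: mult_ac)
qed

lemma SUP_norm2d_truncation_error_le:
  fixes \<xi> \<xi>x \<xi>xx :: "'a::metric_space \<Rightarrow> real \<Rightarrow> real" and I :: "real set"
  assumes "compact S" "S \<noteq> {}" "finite I"
    and K: "coefficient_bounds \<theta> \<sigma> \<phi> Kc Kp" and n: "fine_mesh \<alpha>0 \<beta>0 \<alpha>1 \<beta>1 n"
    and C: "truncation_constant Kc Kp (card I) (\<bar>\<beta>0\<bar> / \<bar>\<alpha>0\<bar>) \<le> C"
    and pc: "\<forall>t\<in>S. PC21 (\<xi> t) (\<xi>x t) (\<xi>xx t)"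
    and cont: "\<forall>s\<in>S. ((\<lambda>t. PC21_norm (\<lambda>x. \<xi> t x - \<xi> s x) (\<lambda>x. \<xi>xx t x - \<xi>xx s x)) \<longlongrightarrow> 0) (at s within S)"
    and bc: "\<forall>t\<in>S. \<alpha>0 * \<xi>x t 0 + \<beta>0 * \<xi> t 0 = 0"
    and nd: "\<forall>t\<in>S. {x\<in>{0..1}. \<not> \<xi>xx t differentiable (at x within {0..1})} \<subseteq> I"
  shows "(SUP t\<in>S. norm2d n (truncation_error \<theta> \<sigma> lam \<phi> \<alpha>0 \<beta>0 \<alpha>1 \<beta>1 n (\<xi> t) (\<xi>x t) (\<xi>xx t)))
    \<le> C * sqrt (hstep n) * (SUP t\<in>S. PC21_norm (\<xi> t) (\<xi>xx t))"
proof (rule SUP_le_mult_SUP[OF assms(2) PC21_norm_bdd_above_compact[OF assms(1) pc cont]])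
  show C0: "0 \<le> C * sqrt (hstep n)"
    using C truncation_constant_nonneg hstep_pos[of n] by (meson order_trans mult_nonneg_nonneg real_sqrt_ge_zero less_imp_le)
  fix t assume t: "t \<in> S"
  have "norm2d n (truncation_error \<theta> \<sigma> lam \<phi> \<alpha>0 \<beta>0 \<alpha>1 \<beta>1 n (\<xi> t) (\<xi>x t) (\<xi>xx t))
      \<le> truncation_constant Kc Kp (card I) (\<bar>\<beta>0\<bar> / \<bar>\<alpha>0\<bar>) * sqrt (hstep n) * PC21_norm (\<xi> t) (\<xi>xx t)"
    using pc bc nd t by (intro norm2d_truncation_error_le[OF _ _ _ assms(3) K n]) auto
  also have "\<dots> \<le> C * sqrt (hstep n) * PC21_norm (\<xi> t) (\<xi>xx t)"
    using C PC21_norm_nonneg pc t hstep_pos[of n] by (intro mult_right_mono) auto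
  finally show "norm2d n (truncation_error \<theta> \<sigma> lam \<phi> \<alpha>0 \<beta>0 \<alpha>1 \<beta>1 n (\<xi> t) (\<xi>x t) (\<xi>xx t))
      \<le> C * sqrt (hstep n) * PC21_norm (\<xi> t) (\<xi>xx t)" .
qed

lemma coefficient_bounds_exist:
  assumes "PCk 1 \<theta>" "PCk 1 \<sigma>" "kernel_C1C1 \<phi>"
  obtains Kc Kp where "coefficient_bounds \<theta> \<sigma> \<phi> Kc Kp"
proof -
  obtain Kp where Kp: "0 \<le> Kp" "\<And>x s. x \<in> {0..1} \<Longrightarrow> s \<in> {0..1} \<Longrightarrow> \<bar>\<phi> x s\<bar> \<le> Kp"
    "\<And>x. x \<in> {0..1} \<Longrightarrow> Kp-lipschitz_on {0..1} (\<phi> x)"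
    using kernel_uniform_bounds[OF assms(3)] by blast
  have "coefficient_bounds \<theta> \<sigma> \<phi> (PCk_norm 1 \<theta> + PCk_norm 1 \<sigma>) Kp"
    unfolding coefficient_bounds_def
  proof (intro conjI ballI)
    show "0 \<le> PCk_norm 1 \<theta> + PCk_norm 1 \<sigma>"
      using PCk_norm_nonneg[OF assms(1)] PCk_norm_nonneg[OF assms(2)] by simp
    fix x :: real assume x: "x \<in> {0..1}"
    show "\<bar>\<theta> x\<bar> \<le> PCk_norm 1 \<theta> + PCk_norm 1 \<sigma>" "\<bar>\<sigma> x\<bar> \<le> PCk_norm 1 \<theta> + PCk_norm 1 \<sigma>"
      using abs_le_PCk_norm[OF assms(1) x] abs_le_PCk_norm[OF assms(2) x]
        PCk_norm_nonneg[OF assms(1)] PCk_norm_nonneg[OF assms(2)] by simp_all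
  qed (use Kp in auto)
  then show thesis by (rule that)
qed

theorem lemma2:
  fixes \<theta> \<sigma> lam :: "real \<Rightarrow> real" and \<phi> :: "real \<Rightarrow> real \<Rightarrow> real"
    and \<alpha>0 \<beta>0 \<alpha>1 \<beta>1 T \<rho> :: real
  assumes "PCk 1 \<theta>" and "PCk 1 \<sigma>" and "PCk 1 lam"
    and "(INF x\<in>{0..1}. \<theta> x) > 0"
    and "kernel_C1C1 \<phi>"
    and "\<forall>n\<ge>1. 3 * \<alpha>0 - 2 * hstep n * \<beta>0 \<noteq> 0 \<and> 3 * \<alpha>1 + 2 * hstep n * \<beta>1 \<noteq> 0
                 \<and> \<alpha>0 - hstep n * \<beta>0 \<noteq> 0"
    and "T > 0" and "0 \<le> \<rho>" and "\<rho> < T"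
  shows "\<exists>C>0. \<forall>(\<xi>::real \<Rightarrow> real \<Rightarrow> real) (\<xi>x::real \<Rightarrow> real \<Rightarrow> real) (\<xi>xx::real \<Rightarrow> real \<Rightarrow> real).
     (\<forall>t\<in>{\<rho>..T}. PC21 (\<xi> t) (\<xi>x t) (\<xi>xx t))
     \<and> (\<forall>s\<in>{\<rho>..T}. ((\<lambda>t. PC21_norm (\<lambda>x. \<xi> t x - \<xi> s x) (\<lambda>x. \<xi>xx t x - \<xi>xx s x)) \<longlongrightarrow> 0)
                        (at s within {\<rho>..T}))
     \<and> (\<forall>t\<in>{\<rho>..T}. \<alpha>0 * \<xi>x t 0 + \<beta>0 * \<xi> t 0 = 0)
     \<and> (\<forall>t\<in>{\<rho>..T}. {x\<in>{0..1}. \<not> \<xi>xx t differentiable (at x within {0..1})} \<subseteq> Iset \<theta> \<sigma> lam)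
     \<longrightarrow> (\<exists>N. \<forall>n\<ge>N.
          (SUP t\<in>{\<rho>..T}. norm2d n (\<lambda>i.
               Rn n (Pop \<theta> \<sigma> lam \<phi> (\<xi> t) (\<xi>x t) (\<xi>xx t)) i
             - matvec n (Pmat \<theta> \<sigma> lam \<phi> \<alpha>0 \<beta>0 \<alpha>1 \<beta>1 n) (Rn n (\<xi> t)) i
             - Bvec \<theta> \<alpha>1 \<beta>1 n i * (\<alpha>1 * \<xi>x t 1 + \<beta>1 * \<xi> t 1)))
          \<le> C * sqrt (hstep n) * (SUP t\<in>{\<rho>..T}. PC21_norm (\<xi> t) (\<xi>xx t)))"
proof -
  obtain Kc Kp where K: "coefficient_bounds \<theta> \<sigma> \<phi> Kc Kp"
    using coefficient_bounds_exist[OF assms(1,2,5)] .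
  define C where "C = truncation_constant Kc Kp (card (Iset \<theta> \<sigma> lam)) (\<bar>\<beta>0\<bar> / \<bar>\<alpha>0\<bar>) + 1"
  have "0 < C" using truncation_constant_nonneg by (simp add: C_def add_nonneg_pos)
  moreover have "\<forall>\<^sub>F n in sequentially.
      (SUP t\<in>{\<rho>..T}. norm2d n (truncation_error \<theta> \<sigma> lam \<phi> \<alpha>0 \<beta>0 \<alpha>1 \<beta>1 n (\<xi> t) (\<xi>x t) (\<xi>xx t)))
        \<le> C * sqrt (hstep n) * (SUP t\<in>{\<rho>..T}. PC21_norm (\<xi> t) (\<xi>xx t))"
    if pc: "\<forall>t\<in>{\<rho>..T}. PC21 (\<xi> t) (\<xi>x t) (\<xi>xx t)"
      and cont: "\<forall>s\<in>{\<rho>..T}. ((\<lambda>t. PC21_norm (\<lambda>x. \<xi> t x - \<xi> s x) (\<lambda>x. \<xi>xx t x - \<xi>xx s x)) \<longlongrightarrow> 0)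
                        (at s within {\<rho>..T})"
      and bc: "\<forall>t\<in>{\<rho>..T}. \<alpha>0 * \<xi>x t 0 + \<beta>0 * \<xi> t 0 = 0"
      and nd: "\<forall>t\<in>{\<rho>..T}. {x\<in>{0..1}. \<not> \<xi>xx t differentiable (at x within {0..1})} \<subseteq> Iset \<theta> \<sigma> lam"
    for \<xi> \<xi>x \<xi>xx
    using eventually_fine_mesh[OF assms(6)]
    by (rule eventually_mono, intro SUP_norm2d_truncation_error_le[OF compact_Icc _ Iset_finite[OF assms(1-3)] K])
      (use pc cont bc nd \<open>\<rho> < T\<close> in \<open>auto simp: C_def\<close>)
  ultimately show ?thesis unfolding eventually_sequentially truncation_error_def by blast
qed

end
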